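(* Define recursively, backward in $t=T-1,\dots,0$, starting from $a_T^+=a_T^-=b_T^+=b_T^-=0$: $\mathbf K_t^+\in\arg\min_{\mathbf K\in\mathbb R^n}F_t^+(\mathbf K)$, $\mathbf K_t^-\in\arg\min_{\mathbf K\in\mathbb R^n}F_t^-(\mathbf K)$ (with $F_t^\pm$ built from $a_{t+1}^\pm,b_{t+1}^\pm$), and $$a_t^+=\rho_{t+1}\mathbb E[\mathbf P_t]'\mathbf K_t^++\mathbb E[a_{t+1}^+Z_t^+1_{\{Z_t^+\ge0\}}]+\mathbb E[a_{t+1}^-Z_t^+1_{\{Z_t^+<0\}}],$$ $$a_t^-=\rho_{t+1}\mathbb E[\mathbf P_t]'\mathbf K_t^-+\mathbb E[a_{t+1}^+Z_t^-1_{\{Z_t^-\le0\}}]+\mathbb E[a_{t+1}^-Z_t^-1_{\{Z_t^->0\}}],$$ $$b_t^+=\rho_{t+1}^2(\mathbf K_t^+)'\mathbb E[\mathbf P_t\mathbf P_t']\mathbf K_t^++2\rho_{t+1}\mathbb E[a_{t+1}^+Z_t^+\mathbf P_t'\mathbf K_t^+1_{\{Z_t^+\ge0\}}]+2\rho_{t+1}\mathbb E[a_{t+1}^-Z_t^+\mathbf P_t'\mathbf K_t^+1_{\{Z_t^+<0\}}]+\mathbb E[b_{t+1}^+(Z_t^+)^21_{\{Z_t^+\ge0\}}]+\mathbb E[b_{t+1}^-(Z_t^+)^21_{\{Z_t^+<0\}}],$$ $$b_t^-=\rho_{t+1}^2(\mathbf K_t^-)'\mathbb E[\mathbf P_t\mathbf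 P_t']\mathbf K_t^-+2\rho_{t+1}\mathbb E[a_{t+1}^+Z_t^-\mathbf P_t'\mathbf K_t^-1_{\{Z_t^-\le0\}}]+2\rho_{t+1}\mathbb E[a_{t+1}^-Z_t^-\mathbf P_t'\mathbf K_t^-1_{\{Z_t^->0\}}]+\mathbb E[b_{t+1}^+(Z_t^-)^21_{\{Z_t^-\le0\}}]+\mathbb E[b_{t+1}^-(Z_t^-)^21_{\{Z_t^->0\}}],$$ where $Z_t^\pm=s_t+\mathbf P_t'\mathbf K_t^\pm$. Then these quantities are well defined (the minimizers exist), $b_t^+-(a_t^+)^2\ge0$ and $b_t^--(a_t^-)^2\ge0$ for all $t$, and the time consistent behavioral portfolio policy of the nested problem is, for $t=0,\dots,T-1$, $$\mathbf u_t^{TC}=\mathbf K_t^+(X_t-\rho_t^{-1}W)1_{\{X_t\ge\rho_t^{-1}W\}}+\mathbf K_t^-(X_t-\rho_t^{-1}W)1_{\{X_t<\rho_t^{-1}W\}}.$$ Moreover, the mean and variance of the terminal wealth under this policy are $$\mathbb E[X_T\mid X_0]=\rho_0X_0+a_0^+(X_0-\rho_0^{-1}W)1_{\{X_0\ge\rho_0^{-1}W\}}+a_0^-(X_0-\rho_0^{-1}W)1_{\{X_0<\rho_0^{-1}W\}},$$ $$\mathrm{Var}(X_T\mid X_0)=\Big[(b_0^+-(a_0^+)^2)1_{\{X_0\ge\rho_0^{-1}W\}}+(b_0^--(a_0^-)^2)1_{\{X_0<\rho_0^{-1}W\}}\Big](X_0-\rho_0^{-1}W)^2.$$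
   Context: Market: $T$ periods, one risk-free asset with deterministic gross return $s_t>1$ in period $t$, and $n$ risky assets with random gross return vector $\mathbf e_t$ in period $t$. The excess return vector is $\mathbf P_t=\mathbf e_t-s_t\mathbf 1\in\mathbb R^n$. The vectors $\mathbf P_0,\dots,\mathbf P_{T-1}$ are statistically independent, absolutely continuous, with finite first and second moments, and each covariance matrix $\mathrm{Cov}(\mathbf P_t)=\mathbb E[\mathbf P_t\mathbf P_t']-\mathbb E[\mathbf P_t]\mathbb E[\mathbf P_t]'$ is positive definite. The market is arbitrage-free; in particular, for every nonzero $\mathbf L\in\mathbb R^n$, neither $\mathbf P_t'\mathbf L\le 0$ a.s. nor $\mathbf P_t'\mathbf L\ge 0$ a.s. holds. Write $\rho_t=\prod_{j=t}^{T-1}s_j$ for $t<T$ and $\rho_T=1$. Wealth dynamics: $X_{t+1}=s_tX_t+\mathbf P_t'\mathbf u_t$, where $\mathbf u_t\in\mathbb R^n$ (amounts in risky assets) is a Markov feedback policy, i.e. a deterministic function of the current wealth $X_t$. An investment target $W\in\mathbb R$ is fixed. Behavioral risk aversion: for constants $\gamma_t^+,\gamma_t^-\ge0$, $\gamma_t(X_t)=\gamma_t^+(X_t-\rho_t^{-1}W)$ if $X_t\ge\rho_t^{-1}W$, and $\gamma_t(X_t)=-\gamma_t^-(X_t-\rho_t^{-1}W)$ if $X_t<\rho_t^{-1}W$. Time consistent policy (nested mean-variance problem): a Markov policy $(\mathbf u_0^{TC},\dots,\mathbf u_{T-1}^{TC})$ is time consistent if for every $t$ and every wealth level $X_t$,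 $\mathbf u_t^{TC}(X_t)$ minimizes over $\mathbf u_t\in\mathbb R^n$ the objective $\mathrm{Var}(X_T\mid X_t)-\gamma_t(X_t)\mathbb E[X_T\mid X_t]$, where $X_{t+1}=s_tX_t+\mathbf P_t'\mathbf u_t$ and $X_{j+1}=s_jX_j+\mathbf P_j'\mathbf u_j^{TC}(X_j)$ for $j=t+1,\dots,T-1$. Definition of $F_t^\pm:\mathbb R^n\to\mathbb R$, given deterministic numbers $a_{t+1}^\pm,b_{t+1}^\pm,\gamma_t^\pm$, writing $Z=s_t+\mathbf P_t'\mathbf K$: $$F_t^+(\mathbf K)=\rho_{t+1}^2\mathbf K'\mathrm{Cov}(\mathbf P_t)\mathbf K+\mathbb E\big[(2\rho_{t+1}a_{t+1}^++b_{t+1}^+)Z^21_{\{Z\ge0\}}\big]+\mathbb E\big[(2\rho_{t+1}a_{t+1}^-+b_{t+1}^-)Z^21_{\{Z<0\}}\big]-M_+^2-2\rho_{t+1}M_+\,(s_t+\mathbb E[\mathbf P_t]'\mathbf K)-\gamma_t^+M_+-\rho_{t+1}\gamma_t^+(s_t+\mathbb E[\mathbf P_t]'\mathbf K),$$ where $M_+=\mathbb E[a_{t+1}^+Z1_{\{Z\ge0\}}]+\mathbb E[a_{t+1}^-Z1_{\{Z<0\}}]$; and $$F_t^-(\mathbf K)=\rho_{t+1}^2\mathbf K'\mathrm{Cov}(\mathbf P_t)\mathbf K+\mathbb E\big[(2\rho_{t+1}a_{t+1}^++b_{t+1}^+)Z^21_{\{Z\le0\}}\big]+\mathbb E\big[(2\rho_{t+1}a_{t+1}^-+b_{t+1}^-)Z^21_{\{Z>0\}}\big]-M_-^2-2\rho_{t+1}M_-\,(s_t+\mathbb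 E[\mathbf P_t]'\mathbf K)+\gamma_t^-M_-+\rho_{t+1}\gamma_t^-(s_t+\mathbb E[\mathbf P_t]'\mathbf K),$$ where $M_-=\mathbb E[a_{t+1}^+Z1_{\{Z\le0\}}]+\mathbb E[a_{t+1}^-Z1_{\{Z>0\}}]$. *)

theory Defs
  imports "HOL-Probability.Probability"
begin

definition rho :: "(nat \<Rightarrow> real) \<Rightarrow> nat \<Rightarrow> nat \<Rightarrow> real" where
  "rho s T t = (\<Prod>j\<in>{t..<T}. s j)"

definition mean_vec :: "'w measure \<Rightarrow> ('w \<Rightarrow> real^'n) \<Rightarrow> real^'n" where
  "mean_vec M X = (\<chi> i. integral\<^sup>L M (\<lambda>\<omega>. X \<omega> $ i))"

definition second_moment :: "'w measure \<Rightarrow> ('w \<Rightarrow> real^'n) \<Rightarrow> real^'n^'n" where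
  "second_moment M X = (\<chi> i j. integral\<^sup>L M (\<lambda>\<omega>. X \<omega> $ i * X \<omega> $ j))"

definition cov_matrix :: "'w measure \<Rightarrow> ('w \<Rightarrow> real^'n) \<Rightarrow> real^'n^'n" where
  "cov_matrix M X = (\<chi> i j. integral\<^sup>L M (\<lambda>\<omega>. X \<omega> $ i * X \<omega> $ j)
      - integral\<^sup>L M (\<lambda>\<omega>. X \<omega> $ i) * integral\<^sup>L M (\<lambda>\<omega>. X \<omega> $ j))"

definition pos_def_matrix :: "real^'n^'n \<Rightarrow> bool" where
  "pos_def_matrix A \<longleftrightarrow> (\<forall>x. x \<noteq> 0 \<longrightarrow> 0 < x \<bullet> (A *v x))"

definition var :: "'w measure \<Rightarrow> ('w \<Rightarrow> real) \<Rightarrow> real" where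
  "var M X = integral\<^sup>L M (\<lambda>\<omega>. (X \<omega> - integral\<^sup>L M X)\<^sup>2)"

text \<open>wealth s P u t k x \<omega>: wealth at time t+k when the wealth at time t is x and the
  Markov feedback policy u is used at times t, ..., t+k-1.\<close>
fun wealth :: "(nat \<Rightarrow> real) \<Rightarrow> (nat \<Rightarrow> 'w \<Rightarrow> real^'n) \<Rightarrow> (nat \<Rightarrow> real \<Rightarrow> real^'n)
      \<Rightarrow> nat \<Rightarrow> nat \<Rightarrow> real \<Rightarrow> 'w \<Rightarrow> real" where
  "wealth s P u t 0 x \<omega> = x"
| "wealth s P u t (Suc k) x \<omega> = wealth s P u (Suc t) k (s t * x + P t \<omega> \<bullet> u t x) \<omega>"

text \<open>Terminal wealth X_T given X_t = x, using the amount v at time t and policy u afterwards.\<close>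
definition terminal_dev :: "(nat \<Rightarrow> real) \<Rightarrow> (nat \<Rightarrow> 'w \<Rightarrow> real^'n) \<Rightarrow> (nat \<Rightarrow> real \<Rightarrow> real^'n)
      \<Rightarrow> nat \<Rightarrow> nat \<Rightarrow> real \<Rightarrow> real^'n \<Rightarrow> 'w \<Rightarrow> real" where
  "terminal_dev s P u T t x v \<omega> = wealth s P u (Suc t) (T - Suc t) (s t * x + P t \<omega> \<bullet> v) \<omega>"

definition gamma_beh :: "(nat \<Rightarrow> real) \<Rightarrow> nat \<Rightarrow> real \<Rightarrow> (nat \<Rightarrow> real) \<Rightarrow> (nat \<Rightarrow> real)
      \<Rightarrow> nat \<Rightarrow> real \<Rightarrow> real" where
  "gamma_beh s T W gp gm t x =
     (if W / rho s T t \<le> x then gp t * (x - W / rho s T t) else - gm t * (x - W / rho s T t))"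

definition time_consistent :: "'w measure \<Rightarrow> (nat \<Rightarrow> real) \<Rightarrow> (nat \<Rightarrow> 'w \<Rightarrow> real^'n) \<Rightarrow> nat
      \<Rightarrow> (nat \<Rightarrow> real \<Rightarrow> real) \<Rightarrow> (nat \<Rightarrow> real \<Rightarrow> real^'n) \<Rightarrow> bool" where
  "time_consistent M s P T gam u \<longleftrightarrow>
     (\<forall>t<T. \<forall>x. \<forall>v.
        var M (terminal_dev s P u T t x (u t x)) - gam t x * integral\<^sup>L M (terminal_dev s P u T t x (u t x))
        \<le> var M (terminal_dev s P u T t x v) - gam t x * integral\<^sup>L M (terminal_dev s P u T t x v))"

definition Fplus :: "'w measure \<Rightarrow> (nat \<Rightarrow> real) \<Rightarrow> (nat \<Rightarrow> 'w \<Rightarrow> real^'n) \<Rightarrow> nat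
    \<Rightarrow> (nat \<Rightarrow> real) \<Rightarrow> (nat \<Rightarrow> real) \<Rightarrow> (nat \<Rightarrow> real) \<Rightarrow> (nat \<Rightarrow> real) \<Rightarrow> (nat \<Rightarrow> real)
    \<Rightarrow> nat \<Rightarrow> real^'n \<Rightarrow> real" where
  "Fplus M s P T ap am bp bm gp t K =
    (let r = rho s T (Suc t);
         Z = (\<lambda>\<omega>. s t + P t \<omega> \<bullet> K);
         Mp = integral\<^sup>L M (\<lambda>\<omega>. ap (Suc t) * Z \<omega> * of_bool (Z \<omega> \<ge> 0))
            + integral\<^sup>L M (\<lambda>\<omega>. am (Suc t) * Z \<omega> * of_bool (Z \<omega> < 0));
         EZ = s t + mean_vec M (P t) \<bullet> K
     in r\<^sup>2 * (K \<bullet> (cov_matrix M (P t) *v K))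
        + integral\<^sup>L M (\<lambda>\<omega>. (2 * r * ap (Suc t) + bp (Suc t)) * (Z \<omega>)\<^sup>2 * of_bool (Z \<omega> \<ge> 0))
        + integral\<^sup>L M (\<lambda>\<omega>. (2 * r * am (Suc t) + bm (Suc t)) * (Z \<omega>)\<^sup>2 * of_bool (Z \<omega> < 0))
        - Mp\<^sup>2 - 2 * r * Mp * EZ - gp t * Mp - r * gp t * EZ)"

definition Fminus :: "'w measure \<Rightarrow> (nat \<Rightarrow> real) \<Rightarrow> (nat \<Rightarrow> 'w \<Rightarrow> real^'n) \<Rightarrow> nat
    \<Rightarrow> (nat \<Rightarrow> real) \<Rightarrow> (nat \<Rightarrow> real) \<Rightarrow> (nat \<Rightarrow> real) \<Rightarrow> (nat \<Rightarrow> real) \<Rightarrow> (nat \<Rightarrow> real)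
    \<Rightarrow> nat \<Rightarrow> real^'n \<Rightarrow> real" where
  "Fminus M s P T ap am bp bm gm t K =
    (let r = rho s T (Suc t);
         Z = (\<lambda>\<omega>. s t + P t \<omega> \<bullet> K);
         Mm = integral\<^sup>L M (\<lambda>\<omega>. ap (Suc t) * Z \<omega> * of_bool (Z \<omega> \<le> 0))
            + integral\<^sup>L M (\<lambda>\<omega>. am (Suc t) * Z \<omega> * of_bool (Z \<omega> > 0));
         EZ = s t + mean_vec M (P t) \<bullet> K
     in r\<^sup>2 * (K \<bullet> (cov_matrix M (P t) *v K))
        + integral\<^sup>L M (\<lambda>\<omega>. (2 * r * ap (Suc t) + bp (Suc t)) * (Z \<omega>)\<^sup>2 * of_bool (Z \<omega> \<le> 0))
        + integral\<^sup>L M (\<lambda>\<omega>. (2 * r * am (Suc t) + bm (Suc t)) * (Z \<omega>)\<^sup>2 * of_bool (Z \<omega> > 0))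
        - Mm\<^sup>2 - 2 * r * Mm * EZ + gm t * Mm + r * gm t * EZ)"

definition recursion_step :: "'w measure \<Rightarrow> (nat \<Rightarrow> real) \<Rightarrow> (nat \<Rightarrow> 'w \<Rightarrow> real^'n) \<Rightarrow> nat
    \<Rightarrow> (nat \<Rightarrow> real) \<Rightarrow> (nat \<Rightarrow> real)
    \<Rightarrow> (nat \<Rightarrow> real^'n) \<Rightarrow> (nat \<Rightarrow> real^'n)
    \<Rightarrow> (nat \<Rightarrow> real) \<Rightarrow> (nat \<Rightarrow> real) \<Rightarrow> (nat \<Rightarrow> real) \<Rightarrow> (nat \<Rightarrow> real) \<Rightarrow> nat \<Rightarrow> bool" where
  "recursion_step M s P T gp gm Kp Km ap am bp bm t \<longleftrightarrow>
    (let r = rho s T (Suc t);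
         Zp = (\<lambda>\<omega>. s t + P t \<omega> \<bullet> Kp t);
         Zm = (\<lambda>\<omega>. s t + P t \<omega> \<bullet> Km t)
     in (\<forall>K. Fplus M s P T ap am bp bm gp t (Kp t) \<le> Fplus M s P T ap am bp bm gp t K)
      \<and> (\<forall>K. Fminus M s P T ap am bp bm gm t (Km t) \<le> Fminus M s P T ap am bp bm gm t K)
      \<and> ap t = r * (mean_vec M (P t) \<bullet> Kp t)
          + integral\<^sup>L M (\<lambda>\<omega>. ap (Suc t) * Zp \<omega> * of_bool (Zp \<omega> \<ge> 0))
          + integral\<^sup>L M (\<lambda>\<omega>. am (Suc t) * Zp \<omega> * of_bool (Zp \<omega> < 0))
      \<and> am t = r * (mean_vec M (P t) \<bullet> Km t)
          + integral\<^sup>L M (\<lambda>\<omega>. ap (Suc t) * Zm \<omega> * of_bool (Zm \<omega> \<le> 0))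
          + integral\<^sup>L M (\<lambda>\<omega>. am (Suc t) * Zm \<omega> * of_bool (Zm \<omega> > 0))
      \<and> bp t = r\<^sup>2 * (Kp t \<bullet> (second_moment M (P t) *v Kp t))
          + 2 * r * integral\<^sup>L M (\<lambda>\<omega>. ap (Suc t) * Zp \<omega> * (P t \<omega> \<bullet> Kp t) * of_bool (Zp \<omega> \<ge> 0))
          + 2 * r * integral\<^sup>L M (\<lambda>\<omega>. am (Suc t) * Zp \<omega> * (P t \<omega> \<bullet> Kp t) * of_bool (Zp \<omega> < 0))
          + integral\<^sup>L M (\<lambda>\<omega>. bp (Suc t) * (Zp \<omega>)\<^sup>2 * of_bool (Zp \<omega> \<ge> 0))
          + integral\<^sup>L M (\<lambda>\<omega>. bm (Suc t) * (Zp \<omega>)\<^sup>2 * of_bool (Zp \<omega> < 0))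
      \<and> bm t = r\<^sup>2 * (Km t \<bullet> (second_moment M (P t) *v Km t))
          + 2 * r * integral\<^sup>L M (\<lambda>\<omega>. ap (Suc t) * Zm \<omega> * (P t \<omega> \<bullet> Km t) * of_bool (Zm \<omega> \<le> 0))
          + 2 * r * integral\<^sup>L M (\<lambda>\<omega>. am (Suc t) * Zm \<omega> * (P t \<omega> \<bullet> Km t) * of_bool (Zm \<omega> > 0))
          + integral\<^sup>L M (\<lambda>\<omega>. bp (Suc t) * (Zm \<omega>)\<^sup>2 * of_bool (Zm \<omega> \<le> 0))
          + integral\<^sup>L M (\<lambda>\<omega>. bm (Suc t) * (Zm \<omega>)\<^sup>2 * of_bool (Zm \<omega> > 0)))"

definition recursion_from :: "'w measure \<Rightarrow> (nat \<Rightarrow> real) \<Rightarrow> (nat \<Rightarrow> 'w \<Rightarrow> real^'n) \<Rightarrow> nat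
    \<Rightarrow> (nat \<Rightarrow> real) \<Rightarrow> (nat \<Rightarrow> real)
    \<Rightarrow> (nat \<Rightarrow> real^'n) \<Rightarrow> (nat \<Rightarrow> real^'n)
    \<Rightarrow> (nat \<Rightarrow> real) \<Rightarrow> (nat \<Rightarrow> real) \<Rightarrow> (nat \<Rightarrow> real) \<Rightarrow> (nat \<Rightarrow> real) \<Rightarrow> nat \<Rightarrow> bool" where
  "recursion_from M s P T gp gm Kp Km ap am bp bm t0 \<longleftrightarrow>
     ap T = 0 \<and> am T = 0 \<and> bp T = 0 \<and> bm T = 0 \<and>
     (\<forall>t. t0 \<le> t \<and> t < T \<longrightarrow> recursion_step M s P T gp gm Kp Km ap am bp bm t)"

definition tc_policy :: "(nat \<Rightarrow> real) \<Rightarrow> nat \<Rightarrow> real \<Rightarrow> (nat \<Rightarrow> real^'n) \<Rightarrow> (nat \<Rightarrow> real^'n)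
    \<Rightarrow> nat \<Rightarrow> real \<Rightarrow> real^'n" where
  "tc_policy s T W Kp Km t x =
     ((x - W / rho s T t) * of_bool (x \<ge> W / rho s T t)) *\<^sub>R Kp t
   + ((x - W / rho s T t) * of_bool (x < W / rho s T t)) *\<^sub>R Km t"

end

theory Submission
  imports Defs
begin

text \<open>Under the candidate policy the terminal wealth, seen from time \<open>t\<close> with wealth \<open>x\<close>, is
  \<open>\<rho>\<^sub>t x + g\<^sub>t\<^sup>+ d\<^sup>+ + g\<^sub>t\<^sup>- d\<^sup>-\<close> with \<open>d = x - W / \<rho>\<^sub>t\<close>, where the random gains \<open>g\<^sub>t\<^sup>\<plusminus>\<close> depend only on
  the returns after \<open>t\<close> and obey a one-step recursion. By independence of the returns,
  \<open>E g\<^sub>t\<^sup>\<plusminus> = a\<^sub>t\<^sup>\<plusminus>\<close> and \<open>E (g\<^sub>t\<^sup>\<plusminus>)\<^sup>2 = b\<^sub>t\<^sup>\<plusminus>\<close>, so \<open>b\<^sub>t\<^sup>\<plusminus> - (a\<^sub>t\<^sup>\<plusminus>)\<^sup>2\<close> is a variance.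
  As a function of the investment \<open>v\<close>, the nested objective at time \<open>t\<close> is one fixed
  mean-variance cost of the one-period excess return shifted by \<open>d s\<^sub>t\<close>, and \<open>F\<^sub>t\<^sup>\<plusminus>\<close> is the same
  cost shifted by \<open>s\<^sub>t\<close>; positive homogeneity of the two-slope payoff then makes \<open>d K\<^sub>t\<^sup>\<plusminus>\<close> optimal.
  Minimizers of \<open>F\<^sub>t\<^sup>\<plusminus>\<close> exist because the cost is continuous and grows quadratically: its
  homogeneous part is positive on the unit sphere, for otherwise \<open>P\<^sub>t \<bullet> L\<close> would be a.s.
  one-signed or a.s. constant, contradicting absence of arbitrage and absolute continuity.\<close>

section \<open>Two-slope functions and variances\<close>

definition two_slope :: "real \<Rightarrow> real \<Rightarrow> real \<Rightarrow> real" where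
  "two_slope a b z = a * max z 0 + b * min z 0"

lemma two_slope_if: "two_slope a b z = (if z \<ge> 0 then a else b) * z"
  by (auto simp: two_slope_def max_def min_def)

lemma two_slope_zero [simp]: "two_slope 0 0 z = 0"
  by (simp add: two_slope_def)

lemma add_two_slope: "r * z + two_slope a b z = two_slope (r + a) (r + b) z"
  by (simp add: two_slope_def max_def min_def algebra_simps)

lemma two_slope_scale_nonneg: "c \<ge> 0 \<Longrightarrow> two_slope a b (c * z) = c * two_slope a b z"
  by (cases "z \<ge> 0") (auto simp: two_slope_if zero_le_mult_iff)

lemma two_slope_scale_nonpos: "c \<le> 0 \<Longrightarrow> two_slope a b (c * z) = c * two_slope b a z"
  by (cases "z \<ge> 0"; cases "z = 0"; cases "c = 0") (auto simp: two_slope_if zero_le_mult_iff)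

lemma abs_two_slope_le: "\<bar>two_slope a b z\<bar> \<le> (\<bar>a\<bar> + \<bar>b\<bar>) * \<bar>z\<bar>"
  by (auto simp: two_slope_if abs_mult intro: mult_right_mono)

lemma two_slope_lipschitz: "\<bar>two_slope a b z - two_slope a b y\<bar> \<le> (\<bar>a\<bar> + \<bar>b\<bar>) * \<bar>z - y\<bar>"
proof -
  have parts: "\<bar>max z 0 - max y 0\<bar> \<le> \<bar>z - y\<bar>" "\<bar>min z 0 - min y 0\<bar> \<le> \<bar>z - y\<bar>"
    by (auto simp: max_def min_def)
  have "\<bar>a * (max z 0 - max y 0) + b * (min z 0 - min y 0)\<bar>
      \<le> \<bar>a\<bar> * \<bar>max z 0 - max y 0\<bar> + \<bar>b\<bar> * \<bar>min z 0 - min y 0\<bar>"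
    by (rule order_trans[OF abs_triangle_ineq]) (simp add: abs_mult)
  also have "\<dots> \<le> \<bar>a\<bar> * \<bar>z - y\<bar> + \<bar>b\<bar> * \<bar>z - y\<bar>"
    using parts by (intro add_mono mult_left_mono) auto
  finally show ?thesis by (simp add: two_slope_def algebra_simps)
qed

lemma continuous_on_two_slope: "continuous_on A (two_slope a b)"
  unfolding two_slope_def by (intro continuous_intros)

lemma borel_measurable_two_slope [measurable (raw)]:
  "f \<in> borel_measurable N \<Longrightarrow> g \<in> borel_measurable N \<Longrightarrow> h \<in> borel_measurable N \<Longrightarrow>
   (\<lambda>x. two_slope (f x) (g x) (h x)) \<in> borel_measurable N"
  unfolding two_slope_def
  by (intro borel_measurable_add borel_measurable_times borel_measurable_max borel_measurable_min
      borel_measurable_const)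

lemma mult_of_bool_sign:
  fixes a z x :: real
  shows "a * z * of_bool (0 \<le> z) = a * max z 0" "a * z * of_bool (z < 0) = a * min z 0"
    "a * z * of_bool (z \<le> 0) = a * min z 0" "a * z * of_bool (0 < z) = a * max z 0"
    "a * z * x * of_bool (0 \<le> z) = a * (x * max z 0)" "a * z * x * of_bool (z < 0) = a * (x * min z 0)"
    "a * z * x * of_bool (z \<le> 0) = a * (x * min z 0)" "a * z * x * of_bool (0 < z) = a * (x * max z 0)"
    "a * z\<^sup>2 * of_bool (0 \<le> z) = a * (max z 0)\<^sup>2" "a * z\<^sup>2 * of_bool (z < 0) = a * (min z 0)\<^sup>2"
    "a * z\<^sup>2 * of_bool (z \<le> 0) = a * (min z 0)\<^sup>2" "a * z\<^sup>2 * of_bool (0 < z) = a * (max z 0)\<^sup>2"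
  by (auto simp: max_def min_def)

lemma max_mult_min_eq_zero: "max (z::real) 0 * min z 0 = 0"
  by (simp add: max_def min_def)

lemma abs_mult_le_sum_squares: "\<bar>x * y\<bar> \<le> x\<^sup>2 + (y::real)\<^sup>2"
proof -
  have "2 * \<bar>x\<bar> * \<bar>y\<bar> \<le> \<bar>x\<bar>\<^sup>2 + \<bar>y\<bar>\<^sup>2" by (rule sum_squares_bound)
  moreover have "0 \<le> \<bar>x\<bar> * \<bar>y\<bar>" by simp
  ultimately show ?thesis unfolding abs_mult power2_abs by linarith
qed

lemma power2_add_le: "(x + y)\<^sup>2 \<le> 2 * x\<^sup>2 + 2 * (y::real)\<^sup>2"
proof -
  have "0 \<le> (x - y)\<^sup>2" by simp
  then show ?thesis by (simp add: power2_eq_square algebra_simps)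
qed

lemma integrable_mult_of_squares:
  fixes f g :: "'a \<Rightarrow> real"
  assumes [measurable]: "f \<in> borel_measurable M" "g \<in> borel_measurable M"
    and "integrable M (\<lambda>x. (f x)\<^sup>2)" "integrable M (\<lambda>x. (g x)\<^sup>2)"
  shows "integrable M (\<lambda>x. f x * g x)"
  by (rule Bochner_Integration.integrable_bound[OF Bochner_Integration.integrable_add[OF assms(3,4)]])
     (auto intro!: AE_I2 order_trans[OF abs_mult_le_sum_squares])

lemma var_nonneg: "var M f \<ge> 0"
  unfolding var_def by (rule integral_nonneg_AE) auto

lemma var_scale: "var M (\<lambda>\<omega>. c * f \<omega>) = c\<^sup>2 * var M f"
proof -
  have "(c * f \<omega> - c * integral\<^sup>L M f)\<^sup>2 = c\<^sup>2 * (f \<omega> - integral\<^sup>L M f)\<^sup>2" for \<omega>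
    by (simp add: power2_eq_square algebra_simps)
  then show ?thesis unfolding var_def integral_mult_right_zero by simp
qed

context prob_space
begin

lemma var_eq_moments:
  assumes "integrable M f" "integrable M (\<lambda>x. (f x)\<^sup>2)"
  shows "var M f = integral\<^sup>L M (\<lambda>x. (f x)\<^sup>2) - (integral\<^sup>L M f)\<^sup>2"
  using variance_eq[OF assms] unfolding var_def by simp

lemma var_add_const:
  assumes "integrable M f"
  shows "var M (\<lambda>\<omega>. c + f \<omega>) = var M f"
  using assms by (simp add: var_def prob_space)

lemma square_diff_const_expand: "(\<lambda>\<omega>. (f \<omega> - c)\<^sup>2) = (\<lambda>\<omega>. (f \<omega>)\<^sup>2 - 2 * c * f \<omega> + (c::real)\<^sup>2)"
  by (simp add: power2_eq_square algebra_simps)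

lemma
  fixes f :: "'a \<Rightarrow> real"
  assumes "integrable M f" "integrable M (\<lambda>\<omega>. (f \<omega>)\<^sup>2)"
  shows integrable_square_diff_const: "integrable M (\<lambda>\<omega>. (f \<omega> - c)\<^sup>2)"
    and integral_square_diff_const:
      "integral\<^sup>L M (\<lambda>\<omega>. (f \<omega> - c)\<^sup>2) = integral\<^sup>L M (\<lambda>\<omega>. (f \<omega>)\<^sup>2) - 2 * c * integral\<^sup>L M f + c\<^sup>2"
  using assms unfolding square_diff_const_expand by (simp_all add: prob_space)

lemma var_le_integral_square_diff:
  fixes f :: "'a \<Rightarrow> real"
  assumes "integrable M f" "integrable M (\<lambda>\<omega>. (f \<omega>)\<^sup>2)"
  shows "var M f \<le> integral\<^sup>L M (\<lambda>\<omega>. (f \<omega> - c)\<^sup>2)"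
proof -
  have "0 \<le> (integral\<^sup>L M f - c)\<^sup>2" by simp
  then show ?thesis unfolding integral_square_diff_const[OF assms] var_eq_moments[OF assms]
    by (simp add: power2_eq_square algebra_simps)
qed

lemma var_le_perturbation:
  fixes f g :: "'a \<Rightarrow> real"
  assumes f: "integrable M f" "integrable M (\<lambda>\<omega>. (f \<omega>)\<^sup>2)"
    and g: "integrable M g" "integrable M (\<lambda>\<omega>. (g \<omega>)\<^sup>2)"
    and close: "\<And>\<omega>. \<bar>f \<omega> - g \<omega>\<bar> \<le> e"
  shows "var M f \<le> 2 * var M g + 2 * e\<^sup>2"
proof -
  let ?m = "integral\<^sup>L M g"
  have pointwise: "(f \<omega> - ?m)\<^sup>2 \<le> 2 * (g \<omega> - ?m)\<^sup>2 + 2 * e\<^sup>2" for \<omega>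
  proof -
    have "(f \<omega> - g \<omega>)\<^sup>2 \<le> e\<^sup>2"
      using close[of \<omega>] by (metis abs_ge_zero power2_abs power_mono)
    moreover have "(f \<omega> - ?m)\<^sup>2 \<le> 2 * (g \<omega> - ?m)\<^sup>2 + 2 * (f \<omega> - g \<omega>)\<^sup>2"
      using power2_add_le[of "g \<omega> - ?m" "f \<omega> - g \<omega>"] by simp
    ultimately show ?thesis by linarith
  qed
  have "var M f \<le> integral\<^sup>L M (\<lambda>\<omega>. (f \<omega> - ?m)\<^sup>2)" by (rule var_le_integral_square_diff[OF f])
  also have "\<dots> \<le> integral\<^sup>L M (\<lambda>\<omega>. 2 * (g \<omega> - ?m)\<^sup>2 + 2 * e\<^sup>2)"
    by (intro integral_mono integrable_square_diff_const f g pointwise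
        Bochner_Integration.integrable_add integrable_mult_right integrable_const)
  also have "\<dots> = 2 * var M g + 2 * e\<^sup>2"
    using integrable_square_diff_const[OF g, of ?m] by (simp add: var_def prob_space)
  finally show ?thesis .
qed

lemma integral_square_le_perturbation:
  fixes f g :: "'a \<Rightarrow> real"
  assumes "integrable M (\<lambda>\<omega>. (f \<omega>)\<^sup>2)" "integrable M (\<lambda>\<omega>. (g \<omega>)\<^sup>2)"
    and close: "\<And>\<omega>. \<bar>f \<omega> - g \<omega>\<bar> \<le> e"
  shows "integral\<^sup>L M (\<lambda>\<omega>. (f \<omega>)\<^sup>2) \<le> 2 * integral\<^sup>L M (\<lambda>\<omega>. (g \<omega>)\<^sup>2) + 2 * e\<^sup>2"
proof -
  have "(f \<omega>)\<^sup>2 \<le> 2 * (g \<omega>)\<^sup>2 + 2 * e\<^sup>2" for \<omega>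
  proof -
    have "(f \<omega> - g \<omega>)\<^sup>2 \<le> e\<^sup>2"
      using close[of \<omega>] by (metis abs_ge_zero power2_abs power_mono)
    moreover have "(f \<omega>)\<^sup>2 \<le> 2 * (g \<omega>)\<^sup>2 + 2 * (f \<omega> - g \<omega>)\<^sup>2"
      using power2_add_le[of "g \<omega>" "f \<omega> - g \<omega>"] by simp
    ultimately show ?thesis by linarith
  qed
  then have "integral\<^sup>L M (\<lambda>\<omega>. (f \<omega>)\<^sup>2) \<le> integral\<^sup>L M (\<lambda>\<omega>. 2 * (g \<omega>)\<^sup>2 + 2 * e\<^sup>2)"
    by (intro integral_mono assms Bochner_Integration.integrable_add integrable_mult_right integrable_const)
  then show ?thesis using assms by (simp add: prob_space)
qed

end

lemma continuous_on_parametric_integral: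
  fixes h :: "'a::metric_space \<Rightarrow> 'w \<Rightarrow> real"
  assumes meas: "\<And>K. h K \<in> borel_measurable M"
   and cont: "\<And>\<omega>. \<omega> \<in> space M \<Longrightarrow> continuous_on UNIV (\<lambda>K. h K \<omega>)"
   and D: "integrable M D"
   and bound: "\<And>K \<omega>. \<omega> \<in> space M \<Longrightarrow> \<bar>h K \<omega>\<bar> \<le> B K * D \<omega>"
   and B: "continuous_on UNIV B"
  shows "continuous_on UNIV (\<lambda>K. integral\<^sup>L M (h K))"
proof (rule continuous_on_sequentiallyI)
  fix x and a :: 'a
  assume lim: "x \<longlonglongrightarrow> a"
  then have "(\<lambda>n. B (x n)) \<longlonglongrightarrow> B a"
    using B by (simp add: continuous_on_eq_continuous_at isCont_tendsto_compose)
  then have "Bseq (\<lambda>n. B (x n))" using convergent_imp_Bseq convergentI by blast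
  then obtain C where C: "\<And>n. norm (B (x n)) \<le> C" by (elim BseqE) blast
  have lim_pointwise: "AE \<omega> in M. (\<lambda>n. h (x n) \<omega>) \<longlonglongrightarrow> h a \<omega>"
  proof (rule AE_I2)
    fix \<omega> assume "\<omega> \<in> space M"
    then have "isCont (\<lambda>K. h K \<omega>) a" using cont by (simp add: continuous_on_eq_continuous_at)
    then show "(\<lambda>n. h (x n) \<omega>) \<longlonglongrightarrow> h a \<omega>" using lim by (rule isCont_tendsto_compose)
  qed
  have dominated: "AE \<omega> in M. norm (h (x n) \<omega>) \<le> C * \<bar>D \<omega>\<bar>" for n
  proof (rule AE_I2)
    fix \<omega> assume "\<omega> \<in> space M"
    then have "\<bar>h (x n) \<omega>\<bar> \<le> \<bar>B (x n)\<bar> * \<bar>D \<omega>\<bar>"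
      using bound[of \<omega> "x n"] by (metis abs_ge_self abs_mult order_trans)
    also have "\<dots> \<le> C * \<bar>D \<omega>\<bar>" using C[of n] by (intro mult_right_mono) auto
    finally show "norm (h (x n) \<omega>) \<le> C * \<bar>D \<omega>\<bar>" by simp
  qed
  have "integrable M (\<lambda>\<omega>. C * \<bar>D \<omega>\<bar>)" using D by simp
  then show "(\<lambda>n. integral\<^sup>L M (h (x n))) \<longlonglongrightarrow> integral\<^sup>L M (h a)"
    by (rule integral_dominated_convergence[OF meas meas _ lim_pointwise dominated])
qed

text \<open>Outside a large ball \<open>f\<close> exceeds \<open>f 0\<close>, so its minimum over that ball is global.\<close>
lemma continuous_quadratic_growth_attains_min:
  fixes f :: "'a::euclidean_space \<Rightarrow> real"
  assumes cont: "continuous_on UNIV f" and m: "0 < m"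
    and growth: "\<And>K. m * (norm K)\<^sup>2 - c0 - c1 * norm K \<le> f K"
  shows "\<exists>K. \<forall>K'. f K \<le> f K'"
proof -
  define R where "R = max 1 ((\<bar>c0\<bar> + \<bar>c1\<bar> + \<bar>f 0\<bar> + 1) / m)"
  have far: "f 0 < f K" if K: "R < norm K" for K
  proof -
    define r where "r = norm K"
    have r1: "1 \<le> r" and "(\<bar>c0\<bar> + \<bar>c1\<bar> + \<bar>f 0\<bar> + 1) / m < r"
      using K unfolding R_def r_def by linarith+
    then have "(\<bar>c0\<bar> + \<bar>c1\<bar> + \<bar>f 0\<bar> + 1) * r < m * r * r"
      using m by (intro mult_strict_right_mono) (auto simp: field_simps)
    moreover have "\<bar>c0\<bar> + \<bar>f 0\<bar> + 1 \<le> (\<bar>c0\<bar> + \<bar>f 0\<bar> + 1) * r"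
      using mult_left_mono[OF r1, of "\<bar>c0\<bar> + \<bar>f 0\<bar> + 1"] by simp
    moreover have "c1 * r \<le> \<bar>c1\<bar> * r"
      using r1 by (intro mult_right_mono) auto
    ultimately have "f 0 < m * r\<^sup>2 - c0 - c1 * r"
      by (simp add: power2_eq_square algebra_simps)
    then show ?thesis using growth[of K] unfolding r_def by linarith
  qed
  have "cball (0::'a) R \<noteq> {}" unfolding R_def by simp
  then obtain K0 where K0: "\<And>K. K \<in> cball 0 R \<Longrightarrow> f K0 \<le> f K"
    using continuous_attains_inf[OF compact_cball _ continuous_on_subset[OF cont]] by blast
  have "0 \<le> R" unfolding R_def by simp
  then have "f K0 \<le> f K" for K
    using K0[of K] K0[of 0] far[of K] by (cases "norm K \<le> R") auto
  then show ?thesis by blast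
qed

section \<open>Moments of a square-integrable return vector\<close>

locale square_integrable_vector = prob_space M for M :: "'w measure" +
  fixes X :: "'w \<Rightarrow> real^'n"
  assumes measurable_vector [measurable]: "X \<in> borel_measurable M"
    and integrable_component: "\<And>i. integrable M (\<lambda>\<omega>. X \<omega> $ i)"
    and integrable_component_square: "\<And>i. integrable M (\<lambda>\<omega>. (X \<omega> $ i)\<^sup>2)"
begin

lemma component_measurable [measurable]: "(\<lambda>\<omega>. X \<omega> $ i) \<in> borel_measurable M"
  using measurable_compose[OF measurable_vector
      borel_measurable_continuous_onI[OF continuous_on_component[OF continuous_on_id]]]
  by simp

lemma integrable_component_mult: "integrable M (\<lambda>\<omega>. X \<omega> $ i * X \<omega> $ j)"
  by (intro integrable_mult_of_squares integrable_component_square component_measurable)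

lemma inner_eq_sum: "X \<omega> \<bullet> K = (\<Sum>i\<in>UNIV. K $ i * X \<omega> $ i)"
  by (simp add: inner_vec_def mult.commute)

lemma integrable_inner: "integrable M (\<lambda>\<omega>. X \<omega> \<bullet> K)"
  unfolding inner_eq_sum by (intro Bochner_Integration.integrable_sum integrable_mult_right integrable_component)

lemma integral_inner: "integral\<^sup>L M (\<lambda>\<omega>. X \<omega> \<bullet> K) = mean_vec M X \<bullet> K"
  unfolding inner_eq_sum
  by (simp add: Bochner_Integration.integral_sum integrable_component mean_vec_def inner_vec_def mult.commute)

lemma inner_square_eq_sum:
  "(X \<omega> \<bullet> K)\<^sup>2 = (\<Sum>i\<in>UNIV. \<Sum>j\<in>UNIV. K $ i * K $ j * (X \<omega> $ i * X \<omega> $ j))"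
  unfolding inner_eq_sum power2_eq_square sum_product by (simp add: algebra_simps)

lemma integrable_inner_square: "integrable M (\<lambda>\<omega>. (X \<omega> \<bullet> K)\<^sup>2)"
  unfolding inner_square_eq_sum
  by (intro Bochner_Integration.integrable_sum integrable_mult_right integrable_component_mult)

lemma integral_inner_square: "integral\<^sup>L M (\<lambda>\<omega>. (X \<omega> \<bullet> K)\<^sup>2) = K \<bullet> (second_moment M X *v K)"
  unfolding inner_square_eq_sum
  by (simp add: Bochner_Integration.integral_sum integrable_component_mult integrable_mult_right
      second_moment_def inner_vec_def matrix_vector_mult_def sum_distrib_left algebra_simps)

lemma quadratic_form_cov:
  "K \<bullet> (cov_matrix M X *v K) = K \<bullet> (second_moment M X *v K) - (mean_vec M X \<bullet> K)\<^sup>2"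
proof -
  have "(\<Sum>i\<in>UNIV. \<Sum>j\<in>UNIV. K $ i * K $ j * (integral\<^sup>L M (\<lambda>\<omega>. X \<omega> $ i) * integral\<^sup>L M (\<lambda>\<omega>. X \<omega> $ j)))
     = (mean_vec M X \<bullet> K)\<^sup>2"
    by (simp add: mean_vec_def inner_vec_def power2_eq_square sum_product algebra_simps)
  then show ?thesis
    by (simp add: cov_matrix_def second_moment_def inner_vec_def matrix_vector_mult_def
        sum_distrib_left algebra_simps sum_subtractf)
qed

definition l1norm :: "'w \<Rightarrow> real" where
  "l1norm \<omega> = (\<Sum>i\<in>UNIV. \<bar>X \<omega> $ i\<bar>)"

text \<open>Up to a constant, \<open>(1 + norm K)\<^sup>2 * envelope \<omega>\<close> dominates \<open>s + X \<omega> \<bullet> K\<close> and its square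
  locally uniformly in \<open>K\<close>; this is the dominating function for continuity in \<open>K\<close>.\<close>
definition envelope :: "'w \<Rightarrow> real" where
  "envelope \<omega> = (1 + l1norm \<omega>)\<^sup>2"

lemma l1norm_nonneg: "0 \<le> l1norm \<omega>"
  unfolding l1norm_def by (intro sum_nonneg) auto

lemma integrable_l1norm: "integrable M l1norm"
  unfolding l1norm_def by (intro Bochner_Integration.integrable_sum integrable_abs integrable_component)

lemma integrable_envelope: "integrable M envelope"
proof -
  have "(l1norm \<omega>)\<^sup>2 = (\<Sum>i\<in>UNIV. \<Sum>j\<in>UNIV. \<bar>X \<omega> $ i * X \<omega> $ j\<bar>)" for \<omega>
    unfolding l1norm_def power2_eq_square sum_product abs_mult ..
  then have "integrable M (\<lambda>\<omega>. (l1norm \<omega>)\<^sup>2)"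
    by (simp only:) (intro Bochner_Integration.integrable_sum integrable_abs integrable_component_mult)
  moreover have "envelope = (\<lambda>\<omega>. 1 + 2 * l1norm \<omega> + (l1norm \<omega>)\<^sup>2)"
    by (auto simp: envelope_def power2_eq_square algebra_simps)
  ultimately show ?thesis
    by (simp add: integrable_l1norm)
qed

lemma abs_inner_le_l1norm: "\<bar>X \<omega> \<bullet> K\<bar> \<le> l1norm \<omega> * norm K"
proof -
  have "\<bar>X \<omega> \<bullet> K\<bar> \<le> (\<Sum>i\<in>UNIV. \<bar>K $ i * X \<omega> $ i\<bar>)"
    unfolding inner_eq_sum by (rule sum_abs)
  also have "\<dots> \<le> (\<Sum>i\<in>UNIV. norm K * \<bar>X \<omega> $ i\<bar>)"
    by (intro sum_mono) (auto simp: abs_mult intro: mult_right_mono component_le_norm_cart)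
  finally show ?thesis by (simp add: l1norm_def sum_distrib_left mult.commute)
qed

lemma abs_two_slope_shifted_le:
  "\<bar>two_slope a b (s + X \<omega> \<bullet> K)\<bar> \<le> (\<bar>a\<bar> + \<bar>b\<bar>) * (1 + \<bar>s\<bar>) * ((1 + l1norm \<omega>) * (1 + norm K))"
proof -
  have l0: "0 \<le> l1norm \<omega>" by (rule l1norm_nonneg)
  then have u1: "1 \<le> (1 + l1norm \<omega>) * (1 + norm K)"
    by (metis add_increasing2 less_eq_real_def mult_1 mult_mono norm_ge_zero zero_less_one)
  have "\<bar>s + X \<omega> \<bullet> K\<bar> \<le> \<bar>s\<bar> + l1norm \<omega> * norm K"
    using abs_inner_le_l1norm[of \<omega> K] by linarith
  also have "\<dots> \<le> \<bar>s\<bar> * ((1 + l1norm \<omega>) * (1 + norm K)) + (1 + l1norm \<omega>) * (1 + norm K)"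
    using u1 l0 mult_left_mono[OF u1 abs_ge_zero[of s]] by (intro add_mono mult_mono) auto
  finally have "\<bar>s + X \<omega> \<bullet> K\<bar> \<le> (1 + \<bar>s\<bar>) * ((1 + l1norm \<omega>) * (1 + norm K))"
    by (simp add: algebra_simps)
  then have "(\<bar>a\<bar> + \<bar>b\<bar>) * \<bar>s + X \<omega> \<bullet> K\<bar> \<le> (\<bar>a\<bar> + \<bar>b\<bar>) * ((1 + \<bar>s\<bar>) * ((1 + l1norm \<omega>) * (1 + norm K)))"
    by (rule mult_left_mono) simp
  then show ?thesis
    using abs_two_slope_le[of a b "s + X \<omega> \<bullet> K"] by (simp add: mult_ac)
qed

lemma abs_two_slope_le_envelope:
  "\<bar>two_slope a b (s + X \<omega> \<bullet> K)\<bar> \<le> (1 + norm K)\<^sup>2 * ((\<bar>a\<bar> + \<bar>b\<bar>) * (1 + \<bar>s\<bar>) * envelope \<omega>)"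
proof -
  define u where "u = (1 + l1norm \<omega>) * (1 + norm K)"
  have "1 \<le> u" unfolding u_def using l1norm_nonneg[of \<omega>]
    by (metis add_increasing2 less_eq_real_def mult_1 mult_mono norm_ge_zero zero_less_one)
  then have "u \<le> u\<^sup>2" by (simp add: power2_eq_square)
  then have "(\<bar>a\<bar> + \<bar>b\<bar>) * (1 + \<bar>s\<bar>) * u \<le> (\<bar>a\<bar> + \<bar>b\<bar>) * (1 + \<bar>s\<bar>) * u\<^sup>2"
    by (rule mult_left_mono) simp
  with abs_two_slope_shifted_le[of a b s \<omega> K] show ?thesis
    by (simp add: u_def envelope_def power_mult_distrib mult_ac)
qed

lemma two_slope_square_le_envelope:
  "\<bar>(two_slope a b (s + X \<omega> \<bullet> K))\<^sup>2\<bar> \<le> (1 + norm K)\<^sup>2 * ((\<bar>a\<bar> + \<bar>b\<bar>)\<^sup>2 * (1 + \<bar>s\<bar>)\<^sup>2 * envelope \<omega>)"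
proof -
  have "\<bar>two_slope a b (s + X \<omega> \<bullet> K)\<bar>\<^sup>2
      \<le> ((\<bar>a\<bar> + \<bar>b\<bar>) * (1 + \<bar>s\<bar>) * ((1 + l1norm \<omega>) * (1 + norm K)))\<^sup>2"
    by (intro power_mono abs_two_slope_shifted_le) simp
  then show ?thesis by (simp add: envelope_def power_mult_distrib mult_ac)
qed

lemma integrable_two_slope: "integrable M (\<lambda>\<omega>. two_slope a b (s + X \<omega> \<bullet> K))"
  by (rule Bochner_Integration.integrable_bound
      [where f="\<lambda>\<omega>. (1 + norm K)\<^sup>2 * ((\<bar>a\<bar> + \<bar>b\<bar>) * (1 + \<bar>s\<bar>) * envelope \<omega>)"])
    (auto intro!: integrable_mult_right integrable_envelope AE_I2
      order_trans[OF abs_two_slope_le_envelope abs_ge_self])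

lemma integrable_two_slope_square: "integrable M (\<lambda>\<omega>. (two_slope a b (s + X \<omega> \<bullet> K))\<^sup>2)"
proof (rule Bochner_Integration.integrable_bound
    [where f="\<lambda>\<omega>. (1 + norm K)\<^sup>2 * ((\<bar>a\<bar> + \<bar>b\<bar>)\<^sup>2 * (1 + \<bar>s\<bar>)\<^sup>2 * envelope \<omega>)"])
  show "AE \<omega> in M. norm ((two_slope a b (s + X \<omega> \<bullet> K))\<^sup>2)
      \<le> norm ((1 + norm K)\<^sup>2 * ((\<bar>a\<bar> + \<bar>b\<bar>)\<^sup>2 * (1 + \<bar>s\<bar>)\<^sup>2 * envelope \<omega>))"
    unfolding real_norm_def by (intro AE_I2 order_trans[OF two_slope_square_le_envelope abs_ge_self])
qed (auto intro!: integrable_mult_right integrable_envelope)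

lemma continuous_on_integral_two_slope:
  "continuous_on UNIV (\<lambda>K. integral\<^sup>L M (\<lambda>\<omega>. two_slope a b (s + X \<omega> \<bullet> K)))"
proof (rule continuous_on_parametric_integral[OF _ _ _ abs_two_slope_le_envelope])
  show "continuous_on UNIV (\<lambda>K. two_slope a b (s + X \<omega> \<bullet> K))" for \<omega>
    by (intro continuous_on_compose2[OF continuous_on_two_slope] continuous_intros) auto
qed (auto intro!: integrable_mult_right integrable_envelope continuous_intros)

lemma continuous_on_integral_two_slope_square:
  "continuous_on UNIV (\<lambda>K. integral\<^sup>L M (\<lambda>\<omega>. (two_slope a b (s + X \<omega> \<bullet> K))\<^sup>2))"
proof (rule continuous_on_parametric_integral[OF _ _ _ two_slope_square_le_envelope])
  show "continuous_on UNIV (\<lambda>K. (two_slope a b (s + X \<omega> \<bullet> K))\<^sup>2)" for \<omega>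
    by (intro continuous_on_compose2[OF continuous_on_two_slope] continuous_intros) auto
qed (auto intro!: integrable_mult_right integrable_envelope continuous_intros)

definition mean_pos :: "real \<Rightarrow> real^'n \<Rightarrow> real" where
  "mean_pos c K = integral\<^sup>L M (\<lambda>\<omega>. max (c + X \<omega> \<bullet> K) 0)"

definition mean_neg :: "real \<Rightarrow> real^'n \<Rightarrow> real" where
  "mean_neg c K = integral\<^sup>L M (\<lambda>\<omega>. min (c + X \<omega> \<bullet> K) 0)"

definition sqmean_pos :: "real \<Rightarrow> real^'n \<Rightarrow> real" where
  "sqmean_pos c K = integral\<^sup>L M (\<lambda>\<omega>. (max (c + X \<omega> \<bullet> K) 0)\<^sup>2)"

definition sqmean_neg :: "real \<Rightarrow> real^'n \<Rightarrow> real" where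
  "sqmean_neg c K = integral\<^sup>L M (\<lambda>\<omega>. (min (c + X \<omega> \<bullet> K) 0)\<^sup>2)"

lemma
  shows integrable_max: "integrable M (\<lambda>\<omega>. max (c + X \<omega> \<bullet> K) 0)"
    and integrable_min: "integrable M (\<lambda>\<omega>. min (c + X \<omega> \<bullet> K) 0)"
    and integrable_max_square: "integrable M (\<lambda>\<omega>. (max (c + X \<omega> \<bullet> K) 0)\<^sup>2)"
    and integrable_min_square: "integrable M (\<lambda>\<omega>. (min (c + X \<omega> \<bullet> K) 0)\<^sup>2)"
proof -
  have "max z 0 = two_slope 1 0 z" "min z 0 = two_slope 0 1 z" for z
    by (auto simp: two_slope_def)
  then show "integrable M (\<lambda>\<omega>. max (c + X \<omega> \<bullet> K) 0)" "integrable M (\<lambda>\<omega>. min (c + X \<omega> \<bullet> K) 0)"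
    "integrable M (\<lambda>\<omega>. (max (c + X \<omega> \<bullet> K) 0)\<^sup>2)" "integrable M (\<lambda>\<omega>. (min (c + X \<omega> \<bullet> K) 0)\<^sup>2)"
    by (simp_all only: integrable_two_slope integrable_two_slope_square)
qed

lemma integral_two_slope:
  "integral\<^sup>L M (\<lambda>\<omega>. two_slope a b (c + X \<omega> \<bullet> K)) = a * mean_pos c K + b * mean_neg c K"
  unfolding two_slope_def mean_pos_def mean_neg_def using integrable_max integrable_min by simp

lemma integral_two_slope_square:
  "integral\<^sup>L M (\<lambda>\<omega>. (two_slope a b (c + X \<omega> \<bullet> K))\<^sup>2) = a\<^sup>2 * sqmean_pos c K + b\<^sup>2 * sqmean_neg c K"
proof -
  have "(two_slope a b z)\<^sup>2 = a\<^sup>2 * (max z 0)\<^sup>2 + b\<^sup>2 * (min z 0)\<^sup>2" for z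
    unfolding two_slope_def power2_eq_square using max_mult_min_eq_zero[of z]
    by (simp add: algebra_simps)
  then show ?thesis
    unfolding sqmean_pos_def sqmean_neg_def using integrable_max_square integrable_min_square by simp
qed

lemma mean_pos_add_mean_neg: "mean_pos c K + mean_neg c K = c + mean_vec M X \<bullet> K"
proof -
  have "max z 0 + min z 0 = z" for z :: real by (simp add: max_def min_def)
  then have "mean_pos c K + mean_neg c K = integral\<^sup>L M (\<lambda>\<omega>. c + X \<omega> \<bullet> K)"
    unfolding mean_pos_def mean_neg_def using integrable_max integrable_min
    by (subst Bochner_Integration.integral_add[symmetric]) auto
  also have "\<dots> = c + mean_vec M X \<bullet> K"
    using integrable_inner by (simp add: integral_inner prob_space)
  finally show ?thesis .
qed

lemma quadratic_form_second_moment: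
  "K \<bullet> (second_moment M X *v K)
     = sqmean_pos c K + sqmean_neg c K - 2 * c * (mean_pos c K + mean_neg c K) + c\<^sup>2"
proof -
  have "(max z 0)\<^sup>2 + (min z 0)\<^sup>2 = z\<^sup>2" for z :: real by (simp add: max_def min_def)
  then have "sqmean_pos c K + sqmean_neg c K = integral\<^sup>L M (\<lambda>\<omega>. (c + X \<omega> \<bullet> K)\<^sup>2)"
    unfolding sqmean_pos_def sqmean_neg_def using integrable_max_square integrable_min_square
    by (subst Bochner_Integration.integral_add[symmetric]) auto
  also have "(\<lambda>\<omega>. (c + X \<omega> \<bullet> K)\<^sup>2) = (\<lambda>\<omega>. c\<^sup>2 + 2 * c * (X \<omega> \<bullet> K) + (X \<omega> \<bullet> K)\<^sup>2)"
    by (simp add: power2_eq_square algebra_simps)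
  also have "integral\<^sup>L M \<dots> = c\<^sup>2 + 2 * c * (mean_vec M X \<bullet> K) + K \<bullet> (second_moment M X *v K)"
    using integrable_inner integrable_inner_square
    by (simp add: integral_inner integral_inner_square prob_space)
  finally show ?thesis unfolding mean_pos_add_mean_neg by (simp add: power2_eq_square algebra_simps)
qed

lemma quadratic_form_cov_eq:
  "K \<bullet> (cov_matrix M X *v K) = sqmean_pos c K + sqmean_neg c K - (mean_pos c K + mean_neg c K)\<^sup>2"
  unfolding quadratic_form_cov quadratic_form_second_moment[of K c] mean_pos_add_mean_neg
  by (simp add: power2_eq_square algebra_simps)

lemma
  shows integral_inner_mult_max:
      "integral\<^sup>L M (\<lambda>\<omega>. (X \<omega> \<bullet> K) * max (c + X \<omega> \<bullet> K) 0) = sqmean_pos c K - c * mean_pos c K"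
    and integral_inner_mult_min:
      "integral\<^sup>L M (\<lambda>\<omega>. (X \<omega> \<bullet> K) * min (c + X \<omega> \<bullet> K) 0) = sqmean_neg c K - c * mean_neg c K"
proof -
  have "x * max (c + x) 0 = (max (c + x) 0)\<^sup>2 - c * max (c + x) 0"
    "x * min (c + x) 0 = (min (c + x) 0)\<^sup>2 - c * min (c + x) 0" for x :: real
    by (auto simp: max_def min_def power2_eq_square algebra_simps)
  then show "integral\<^sup>L M (\<lambda>\<omega>. (X \<omega> \<bullet> K) * max (c + X \<omega> \<bullet> K) 0) = sqmean_pos c K - c * mean_pos c K"
    "integral\<^sup>L M (\<lambda>\<omega>. (X \<omega> \<bullet> K) * min (c + X \<omega> \<bullet> K) 0) = sqmean_neg c K - c * mean_neg c K"
    unfolding sqmean_pos_def mean_pos_def sqmean_neg_def mean_neg_def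
    using integrable_max integrable_min integrable_max_square integrable_min_square by simp_all
qed

text \<open>Both \<open>F\<^sub>t\<^sup>\<plusminus>\<close> and the nested objective at time \<open>t\<close> have this form: \<open>a, b\<close> are \<open>\<rho>\<^sub>t\<^sub>+\<^sub>1\<close> plus the
  mean future gains and \<open>c\<^sup>2, d\<^sup>2\<close> the variances of the future gains.\<close>
definition mv_cost :: "real \<Rightarrow> real \<Rightarrow> real \<Rightarrow> real \<Rightarrow> real \<Rightarrow> real \<Rightarrow> real^'n \<Rightarrow> real" where
  "mv_cost a b c d s g K = var M (\<lambda>\<omega>. two_slope a b (s + X \<omega> \<bullet> K))
     + integral\<^sup>L M (\<lambda>\<omega>. (two_slope c d (s + X \<omega> \<bullet> K))\<^sup>2)
     - g * integral\<^sup>L M (\<lambda>\<omega>. two_slope a b (s + X \<omega> \<bullet> K))"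

lemma mv_cost_eq_integrals:
  "mv_cost a b c d s g K = integral\<^sup>L M (\<lambda>\<omega>. (two_slope a b (s + X \<omega> \<bullet> K))\<^sup>2)
     - (integral\<^sup>L M (\<lambda>\<omega>. two_slope a b (s + X \<omega> \<bullet> K)))\<^sup>2
     + integral\<^sup>L M (\<lambda>\<omega>. (two_slope c d (s + X \<omega> \<bullet> K))\<^sup>2)
     - g * integral\<^sup>L M (\<lambda>\<omega>. two_slope a b (s + X \<omega> \<bullet> K))"
  unfolding mv_cost_def
  by (subst var_eq_moments[OF integrable_two_slope integrable_two_slope_square]) simp

lemma mv_cost_eq:
  "mv_cost a b c d s g K = (a\<^sup>2 + c\<^sup>2) * sqmean_pos s K + (b\<^sup>2 + d\<^sup>2) * sqmean_neg s K
     - (a * mean_pos s K + b * mean_neg s K)\<^sup>2 - g * (a * mean_pos s K + b * mean_neg s K)"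
  unfolding mv_cost_eq_integrals integral_two_slope integral_two_slope_square
  by (simp add: algebra_simps)

lemma continuous_on_mv_cost: "continuous_on UNIV (mv_cost a b c d s g)"
  unfolding mv_cost_eq_integrals[abs_def]
  by (intro continuous_intros continuous_on_integral_two_slope continuous_on_integral_two_slope_square)

lemma mv_cost_unshifted:
  "mv_cost a b c d 0 0 K = var M (\<lambda>\<omega>. two_slope a b (X \<omega> \<bullet> K))
     + integral\<^sup>L M (\<lambda>\<omega>. (two_slope c d (X \<omega> \<bullet> K))\<^sup>2)"
  by (simp add: mv_cost_def)

lemma mv_cost_unshifted_nonneg: "0 \<le> mv_cost a b c d 0 0 K"
proof -
  have "0 \<le> integral\<^sup>L M (\<lambda>\<omega>. (two_slope c d (X \<omega> \<bullet> K))\<^sup>2)" by (rule integral_nonneg_AE) auto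
  then show ?thesis using var_nonneg unfolding mv_cost_unshifted by (rule add_nonneg_nonneg[rotated])
qed

lemma mv_cost_unshifted_homogeneous:
  assumes "t \<ge> 0"
  shows "mv_cost a b c d 0 0 (t *\<^sub>R L) = t\<^sup>2 * mv_cost a b c d 0 0 L"
proof -
  have "two_slope a b (X \<omega> \<bullet> (t *\<^sub>R L)) = t * two_slope a b (X \<omega> \<bullet> L)" for a b \<omega>
    using two_slope_scale_nonneg[OF assms] by simp
  then show ?thesis unfolding mv_cost_unshifted
    by (simp add: var_scale power_mult_distrib algebra_simps)
qed

lemma mv_cost_scale:
  assumes "d \<noteq> 0"
  shows "mv_cost a b c e (d * s) g v = d\<^sup>2 * (if d > 0 then mv_cost a b c e s (g / d) ((1/d) *\<^sub>R v)
                                               else mv_cost b a e c s (g / d) ((1/d) *\<^sub>R v))"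
proof -
  define w where "w = (1/d) *\<^sub>R v"
  have z: "d * s + X \<omega> \<bullet> v = d * (s + X \<omega> \<bullet> w)" for \<omega>
    unfolding w_def using assms by (simp add: algebra_simps)
  show ?thesis
  proof (cases "d > 0")
    case True
    then have scale: "two_slope a' b' (d * s + X \<omega> \<bullet> v) = d * two_slope a' b' (s + X \<omega> \<bullet> w)" for a' b' \<omega>
      unfolding z by (intro two_slope_scale_nonneg) simp
    show ?thesis unfolding mv_cost_def scale var_scale integral_mult_right_zero w_def[symmetric]
      using True by (simp add: power_mult_distrib power2_eq_square field_simps)
  next
    case False
    then have scale: "two_slope a' b' (d * s + X \<omega> \<bullet> v) = d * two_slope b' a' (s + X \<omega> \<bullet> w)" for a' b' \<omega>
      unfolding z by (intro two_slope_scale_nonpos) simp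
    show ?thesis unfolding mv_cost_def scale var_scale integral_mult_right_zero w_def[symmetric]
      using False assms by (simp add: power_mult_distrib power2_eq_square field_simps)
  qed
qed

lemma abs_integral_two_slope_le:
  "\<bar>integral\<^sup>L M (\<lambda>\<omega>. two_slope a b (s + X \<omega> \<bullet> K))\<bar>
     \<le> (\<bar>a\<bar> + \<bar>b\<bar>) * \<bar>s\<bar> + (\<bar>a\<bar> + \<bar>b\<bar>) * integral\<^sup>L M l1norm * norm K"
proof -
  have pointwise: "\<bar>two_slope a b (s + X \<omega> \<bullet> K)\<bar> \<le> (\<bar>a\<bar> + \<bar>b\<bar>) * \<bar>s\<bar> + (\<bar>a\<bar> + \<bar>b\<bar>) * norm K * l1norm \<omega>" for \<omega>
  proof -
    have "\<bar>two_slope a b (s + X \<omega> \<bullet> K)\<bar> \<le> (\<bar>a\<bar> + \<bar>b\<bar>) * \<bar>s + X \<omega> \<bullet> K\<bar>" by (rule abs_two_slope_le)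
    also have "\<dots> \<le> (\<bar>a\<bar> + \<bar>b\<bar>) * (\<bar>s\<bar> + l1norm \<omega> * norm K)"
      using abs_inner_le_l1norm[of \<omega> K] by (intro mult_left_mono) auto
    finally show ?thesis by (simp add: algebra_simps)
  qed
  have "\<bar>integral\<^sup>L M (\<lambda>\<omega>. two_slope a b (s + X \<omega> \<bullet> K))\<bar> \<le> integral\<^sup>L M (\<lambda>\<omega>. \<bar>two_slope a b (s + X \<omega> \<bullet> K)\<bar>)"
    by (rule integral_abs_bound)
  also have "\<dots> \<le> integral\<^sup>L M (\<lambda>\<omega>. (\<bar>a\<bar> + \<bar>b\<bar>) * \<bar>s\<bar> + (\<bar>a\<bar> + \<bar>b\<bar>) * norm K * l1norm \<omega>)"
    by (intro integral_mono integrable_abs integrable_two_slope pointwise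
        Bochner_Integration.integrable_add integrable_mult_right integrable_const integrable_l1norm)
  finally show ?thesis using integrable_l1norm by (simp add: prob_space algebra_simps)
qed

text \<open>Shifting the excess return by \<open>s\<close> moves \<open>two_slope\<close> by at most a constant, so the
  quadratic part of \<open>mv_cost\<close> still dominates up to linear terms.\<close>
lemma mv_cost_lower_bound:
  "mv_cost a b c d 0 0 K / 2
     - (((\<bar>a\<bar> + \<bar>b\<bar>)\<^sup>2 + (\<bar>c\<bar> + \<bar>d\<bar>)\<^sup>2) * s\<^sup>2 + \<bar>g\<bar> * (\<bar>a\<bar> + \<bar>b\<bar>) * \<bar>s\<bar>)
     - \<bar>g\<bar> * (\<bar>a\<bar> + \<bar>b\<bar>) * integral\<^sup>L M l1norm * norm K
   \<le> mv_cost a b c d s g K"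
proof -
  have shift: "\<bar>two_slope a' b' (X \<omega> \<bullet> K) - two_slope a' b' (s + X \<omega> \<bullet> K)\<bar> \<le> (\<bar>a'\<bar> + \<bar>b'\<bar>) * \<bar>s\<bar>"
    for a' b' \<omega>
    using two_slope_lipschitz[of a' b' "X \<omega> \<bullet> K" "s + X \<omega> \<bullet> K"] by simp
  note int0 = integrable_two_slope[where s=0, simplified] integrable_two_slope_square[where s=0, simplified]
  have var: "var M (\<lambda>\<omega>. two_slope a b (X \<omega> \<bullet> K))
      \<le> 2 * var M (\<lambda>\<omega>. two_slope a b (s + X \<omega> \<bullet> K)) + 2 * ((\<bar>a\<bar> + \<bar>b\<bar>) * \<bar>s\<bar>)\<^sup>2"
    by (rule var_le_perturbation[OF int0 integrable_two_slope integrable_two_slope_square shift])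
  have sq: "integral\<^sup>L M (\<lambda>\<omega>. (two_slope c d (X \<omega> \<bullet> K))\<^sup>2)
      \<le> 2 * integral\<^sup>L M (\<lambda>\<omega>. (two_slope c d (s + X \<omega> \<bullet> K))\<^sup>2) + 2 * ((\<bar>c\<bar> + \<bar>d\<bar>) * \<bar>s\<bar>)\<^sup>2"
    by (rule integral_square_le_perturbation[OF int0(2) integrable_two_slope_square shift])
  let ?E = "integral\<^sup>L M (\<lambda>\<omega>. two_slope a b (s + X \<omega> \<bullet> K))"
  have "g * ?E \<le> \<bar>g\<bar> * \<bar>?E\<bar>" by (metis abs_ge_self abs_mult)
  also have "\<dots> \<le> \<bar>g\<bar> * ((\<bar>a\<bar> + \<bar>b\<bar>) * \<bar>s\<bar> + (\<bar>a\<bar> + \<bar>b\<bar>) * integral\<^sup>L M l1norm * norm K)"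
    by (intro mult_left_mono abs_integral_two_slope_le) simp
  finally have mean: "g * ?E \<le> \<bar>g\<bar> * (\<bar>a\<bar> + \<bar>b\<bar>) * \<bar>s\<bar> + \<bar>g\<bar> * (\<bar>a\<bar> + \<bar>b\<bar>) * integral\<^sup>L M l1norm * norm K"
    by (simp add: algebra_simps)
  have sq_shift: "((\<bar>a\<bar> + \<bar>b\<bar>) * \<bar>s\<bar>)\<^sup>2 = (\<bar>a\<bar> + \<bar>b\<bar>)\<^sup>2 * s\<^sup>2" "((\<bar>c\<bar> + \<bar>d\<bar>) * \<bar>s\<bar>)\<^sup>2 = (\<bar>c\<bar> + \<bar>d\<bar>)\<^sup>2 * s\<^sup>2"
    by (simp_all add: power_mult_distrib)
  show ?thesis
    using var[unfolded sq_shift] sq[unfolded sq_shift] mean unfolding mv_cost_def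
    by (simp add: field_simps)
qed

end

section \<open>Existence of minimizers\<close>

locale nondegenerate_return = square_integrable_vector M X for M :: "'w measure" and X :: "'w \<Rightarrow> real^'n" +
  assumes no_arbitrage:
      "\<And>L. L \<noteq> 0 \<Longrightarrow> \<not> (AE \<omega> in M. X \<omega> \<bullet> L \<le> 0) \<and> \<not> (AE \<omega> in M. X \<omega> \<bullet> L \<ge> 0)"
    and absolutely_continuous_distr: "absolutely_continuous lborel (distr M lborel X)"
begin

lemma AE_inner_neq:
  assumes "L \<noteq> 0"
  shows "AE \<omega> in M. X \<omega> \<bullet> L \<noteq> c"
proof -
  let ?H = "{x::real^'n. L \<bullet> x = c}"
  have "negligible ?H" using negligible_hyperplane assms by blast
  then have "?H \<in> null_sets lebesgue" by (simp add: negligible_iff_null_sets)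
  moreover have "?H \<in> sets lborel" using closed_hyperplane[of L c] by (simp add: borel_closed)
  ultimately have "?H \<in> null_sets lborel" using null_sets_completion_iff by blast
  then have "?H \<in> null_sets (distr M lborel X)"
    using absolutely_continuous_distr unfolding absolutely_continuous_def by blast
  moreover have "X \<in> measurable M lborel" using measurable_vector by simp
  ultimately have "X -` ?H \<inter> space M \<in> null_sets M" using null_sets_distr_iff by blast
  then show ?thesis by (rule AE_I') (auto simp: inner_commute)
qed

text \<open>A nonzero slope makes \<open>two_slope\<close> injective on one half-line; since \<open>X \<bullet> L\<close> has no atoms,
  an a.s. constant value forces \<open>X \<bullet> L\<close> to stay a.s. in the other half-line.\<close>
lemma not_AE_two_slope_eq_const:
  assumes L: "L \<noteq> 0" and slopes: "a \<noteq> 0 \<or> b \<noteq> 0"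
  shows "\<not> (AE \<omega> in M. two_slope a b (X \<omega> \<bullet> L) = k)"
proof
  assume const: "AE \<omega> in M. two_slope a b (X \<omega> \<bullet> L) = k"
  have "(AE \<omega> in M. X \<omega> \<bullet> L \<le> 0) \<or> (AE \<omega> in M. X \<omega> \<bullet> L \<ge> 0)"
  proof (cases "a \<noteq> 0")
    case True
    from const AE_inner_neq[OF L, of "k / a"] have "AE \<omega> in M. X \<omega> \<bullet> L \<le> 0"
      by eventually_elim (use True in \<open>auto simp: two_slope_if field_simps split: if_splits\<close>)
    then show ?thesis ..
  next
    case False
    with slopes have "b \<noteq> 0" by simp
    from const AE_inner_neq[OF L, of "k / b"] have "AE \<omega> in M. X \<omega> \<bullet> L \<ge> 0"
      by eventually_elim (use \<open>b \<noteq> 0\<close> in \<open>auto simp: two_slope_if field_simps split: if_splits\<close>)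
    then show ?thesis ..
  qed
  then show False using no_arbitrage[OF L] by blast
qed

lemma mv_cost_unshifted_pos:
  assumes slopes: "a \<noteq> 0 \<or> b \<noteq> 0 \<or> c \<noteq> 0 \<or> d \<noteq> 0" and L: "L \<noteq> 0"
  shows "0 < mv_cost a b c d 0 0 L"
proof (rule ccontr)
  assume "\<not> 0 < mv_cost a b c d 0 0 L"
  moreover have "0 \<le> integral\<^sup>L M (\<lambda>\<omega>. (two_slope c d (X \<omega> \<bullet> L))\<^sup>2)" by (rule integral_nonneg_AE) auto
  moreover note var_nonneg[of M "\<lambda>\<omega>. two_slope a b (X \<omega> \<bullet> L)"]
  ultimately have var0: "var M (\<lambda>\<omega>. two_slope a b (X \<omega> \<bullet> L)) = 0"
    and sq0: "integral\<^sup>L M (\<lambda>\<omega>. (two_slope c d (X \<omega> \<bullet> L))\<^sup>2) = 0"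
    unfolding mv_cost_unshifted by linarith+
  note int0 = integrable_two_slope[where s=0, simplified] integrable_two_slope_square[where s=0, simplified]
  have "AE \<omega> in M. two_slope c d (X \<omega> \<bullet> L) = 0"
    using sq0 integral_nonneg_eq_0_iff_AE[OF int0(2)] by auto
  then have cd: "c = 0 \<and> d = 0" using not_AE_two_slope_eq_const[OF L] by blast
  have "AE \<omega> in M. two_slope a b (X \<omega> \<bullet> L) = integral\<^sup>L M (\<lambda>\<omega>. two_slope a b (X \<omega> \<bullet> L))"
    using var0 integral_nonneg_eq_0_iff_AE[OF integrable_square_diff_const[OF int0]]
    unfolding var_def by auto
  then have "a = 0 \<and> b = 0" using not_AE_two_slope_eq_const[OF L] by blast
  with cd slopes show False by blast
qed

lemma mv_cost_unshifted_quadratic_lower: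
  assumes slopes: "a \<noteq> 0 \<or> b \<noteq> 0 \<or> c \<noteq> 0 \<or> d \<noteq> 0"
  obtains m where "0 < m" "\<And>K. m * (norm K)\<^sup>2 \<le> mv_cost a b c d 0 0 K"
proof -
  let ?S = "sphere (0::real^'n) 1"
  obtain L0 :: "real^'n" where "norm L0 = 1" using vector_choose_size[of 1] by auto
  then have "?S \<noteq> {}" by auto
  moreover have "continuous_on ?S (mv_cost a b c d 0 0)"
    using continuous_on_mv_cost continuous_on_subset by blast
  ultimately obtain Lmin
    where Lmin: "Lmin \<in> ?S" "\<And>L. L \<in> ?S \<Longrightarrow> mv_cost a b c d 0 0 Lmin \<le> mv_cost a b c d 0 0 L"
    using continuous_attains_inf[OF compact_sphere] by blast
  define m where "m = mv_cost a b c d 0 0 Lmin"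
  have "0 < m" unfolding m_def using Lmin(1) by (intro mv_cost_unshifted_pos slopes) auto
  moreover have "m * (norm K)\<^sup>2 \<le> mv_cost a b c d 0 0 K" for K
  proof (cases "K = 0")
    case True then show ?thesis using mv_cost_unshifted_nonneg by simp
  next
    case False
    let ?L = "inverse (norm K) *\<^sub>R K"
    have "K = norm K *\<^sub>R ?L" using False by simp
    then have "mv_cost a b c d 0 0 K = (norm K)\<^sup>2 * mv_cost a b c d 0 0 ?L"
      by (metis mv_cost_unshifted_homogeneous norm_ge_zero)
    moreover have "m \<le> mv_cost a b c d 0 0 ?L" unfolding m_def using False by (intro Lmin(2)) simp
    ultimately show ?thesis by (metis mult.commute mult_right_mono zero_le_power2)
  qed
  ultimately show ?thesis by (rule that)
qed

lemma mv_cost_attains_min: "\<exists>K. \<forall>K'. mv_cost a b c d s g K \<le> mv_cost a b c d s g K'"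
proof (cases "a = 0 \<and> b = 0 \<and> c = 0 \<and> d = 0")
  case True
  then show ?thesis by (simp add: mv_cost_def var_def)
next
  case False
  then obtain m where m: "0 < m" "\<And>K. m * (norm K)\<^sup>2 \<le> mv_cost a b c d 0 0 K"
    using mv_cost_unshifted_quadratic_lower by blast
  show ?thesis
  proof (rule continuous_quadratic_growth_attains_min[OF continuous_on_mv_cost])
    show "0 < m / 2" using m(1) by simp
    show "m / 2 * (norm K)\<^sup>2 - (((\<bar>a\<bar> + \<bar>b\<bar>)\<^sup>2 + (\<bar>c\<bar> + \<bar>d\<bar>)\<^sup>2) * s\<^sup>2 + \<bar>g\<bar> * (\<bar>a\<bar> + \<bar>b\<bar>) * \<bar>s\<bar>)
        - \<bar>g\<bar> * (\<bar>a\<bar> + \<bar>b\<bar>) * integral\<^sup>L M l1norm * norm K \<le> mv_cost a b c d s g K" for K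
      using mv_cost_lower_bound[of a b c d K s g] m(2)[of K] by linarith
  qed
qed

end

section \<open>Wealth under the candidate policy\<close>

lemma rho_self [simp]: "rho s T T = 1"
  by (simp add: rho_def)

lemma rho_Suc: "t < T \<Longrightarrow> rho s T t = s t * rho s T (Suc t)"
  unfolding rho_def by (simp add: prod.atLeast_Suc_lessThan)

lemma rho_pos: "(\<And>j. j < T \<Longrightarrow> 0 < s j) \<Longrightarrow> 0 < rho s T t"
  unfolding rho_def by (intro prod_pos) auto

lemma tc_policy_surplus_step:
  fixes x W :: real
  assumes spos: "\<And>j. j < T \<Longrightarrow> 0 < s j" and t: "t < T"
  defines "d \<equiv> x - W / rho s T t"
  shows "s t * x + q \<bullet> tc_policy s T W Kp Km t x - W / rho s T (Suc t)
           = d * (s t + q \<bullet> (if d \<ge> 0 then Kp t else Km t))"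
proof -
  have "s t * (W / rho s T t) = W / rho s T (Suc t)"
    using spos[OF t] rho_pos[OF spos, of "Suc t"] unfolding rho_Suc[OF t] by (simp add: field_simps)
  then show ?thesis
    unfolding tc_policy_def d_def by (simp add: algebra_simps)
qed

text \<open>Starting at time \<open>T - k\<close>, \<open>tc_policy\<close> turns wealth \<open>x\<close> into terminal wealth
  \<open>\<rho> x + two_slope g\<^sup>+ g\<^sup>- (x - W / \<rho>)\<close>, where \<open>(g\<^sup>+, g\<^sup>-) = tc_gains s T Kp Km k Q\<close> are the gains per
  unit of surplus and of deficit along the return path \<open>Q\<close>.\<close>
fun tc_gains :: "(nat \<Rightarrow> real) \<Rightarrow> nat \<Rightarrow> (nat \<Rightarrow> real^'n) \<Rightarrow> (nat \<Rightarrow> real^'n) \<Rightarrow> nat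
    \<Rightarrow> (nat \<Rightarrow> real^'n) \<Rightarrow> real \<times> real" where
  "tc_gains s T Kp Km 0 Q = (0, 0)"
| "tc_gains s T Kp Km (Suc k) Q =
    (let t = T - Suc k; r = rho s T (Suc t); g = tc_gains s T Kp Km k Q in
      (r * (Q t \<bullet> Kp t) + two_slope (fst g) (snd g) (s t + Q t \<bullet> Kp t),
       r * (Q t \<bullet> Km t) + two_slope (snd g) (fst g) (s t + Q t \<bullet> Km t)))"

lemma wealth_tc_policy:
  assumes spos: "\<And>j. j < T \<Longrightarrow> 0 < s j" and "t + k = T"
  shows "wealth s P (tc_policy s T W Kp Km) t k x \<omega>
           = rho s T t * x + two_slope (fst (tc_gains s T Kp Km k (\<lambda>i. P i \<omega>)))
               (snd (tc_gains s T Kp Km k (\<lambda>i. P i \<omega>))) (x - W / rho s T t)"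
  using assms(2)
proof (induction k arbitrary: t x)
  case 0
  then show ?case by simp
next
  case (Suc k)
  then have t: "t < T" and t_eq: "T - Suc k = t" and IH_index: "Suc t + k = T" by auto
  define r where "r = rho s T (Suc t)"
  define g where "g = tc_gains s T Kp Km k (\<lambda>i. P i \<omega>)"
  define d where "d = x - W / rho s T t"
  define K where "K = (if d \<ge> 0 then Kp t else Km t)"
  define y where "y = s t * x + P t \<omega> \<bullet> tc_policy s T W Kp Km t x"
  have step: "y - W / r = d * (s t + P t \<omega> \<bullet> K)"
    unfolding y_def r_def d_def K_def by (rule tc_policy_surplus_step[OF spos t])
  have y: "r * y = rho s T t * x + r * d * (P t \<omega> \<bullet> K)"
    unfolding y_def r_def rho_Suc[OF t] tc_policy_def K_def d_def by (simp add: algebra_simps)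
  have scale: "two_slope (fst g) (snd g) (d * z)
      = d * two_slope (if d \<ge> 0 then fst g else snd g) (if d \<ge> 0 then snd g else fst g) z" for z
    by (cases "d \<ge> 0") (simp_all add: two_slope_scale_nonneg two_slope_scale_nonpos)
  have "wealth s P (tc_policy s T W Kp Km) t (Suc k) x \<omega> = r * y + two_slope (fst g) (snd g) (y - W / r)"
    using Suc.IH[OF IH_index] unfolding y_def r_def g_def by simp
  also have "\<dots> = rho s T t * x
      + d * (r * (P t \<omega> \<bullet> K) + two_slope (if d \<ge> 0 then fst g else snd g) (if d \<ge> 0 then snd g else fst g)
               (s t + P t \<omega> \<bullet> K))"
    unfolding step y scale by (simp add: algebra_simps)
  also have "\<dots> = rho s T t * x + two_slope (fst (tc_gains s T Kp Km (Suc k) (\<lambda>i. P i \<omega>)))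
      (snd (tc_gains s T Kp Km (Suc k) (\<lambda>i. P i \<omega>))) d"
    by (cases "d \<ge> 0") (simp_all add: t_eq Let_def r_def g_def K_def two_slope_if mult.commute)
  finally show ?case unfolding d_def .
qed

lemma tc_gains_local:
  "k \<le> T \<Longrightarrow> (\<And>i. i \<in> {T - k..<T} \<Longrightarrow> Q i = Q' i) \<Longrightarrow> tc_gains s T Kp Km k Q = tc_gains s T Kp Km k Q'"
proof (induction k)
  case (Suc k)
  then have "tc_gains s T Kp Km k Q = tc_gains s T Kp Km k Q'" by force
  moreover have "Q (T - Suc k) = Q' (T - Suc k)" using Suc.prems by auto
  ultimately show ?case by (simp add: Let_def)
qed simp

lemma tc_gains_measurable:
  assumes "k \<le> T" "{T - k..<T} \<subseteq> I"
  shows "(\<lambda>Q. fst (tc_gains s T Kp Km k Q)) \<in> borel_measurable (PiM I (\<lambda>_. borel :: (real^'n) measure))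
       \<and> (\<lambda>Q. snd (tc_gains s T Kp Km k Q)) \<in> borel_measurable (PiM I (\<lambda>_. borel :: (real^'n) measure))"
  using assms
proof (induction k)
  case (Suc k)
  then have "T - Suc k \<in> I" by auto
  then have [measurable]: "(\<lambda>Q. Q (T - Suc k)) \<in> borel_measurable (PiM I (\<lambda>_. borel :: (real^'n) measure))"
    using measurable_component_singleton[of "T - Suc k" I "\<lambda>_. borel"] by simp
  have "{T - k..<T} \<subseteq> I" using Suc.prems(2) by (rule order_trans[rotated]) auto
  then have [measurable]:
    "(\<lambda>Q. fst (tc_gains s T Kp Km k Q)) \<in> borel_measurable (PiM I (\<lambda>_. borel :: (real^'n) measure))"
    "(\<lambda>Q. snd (tc_gains s T Kp Km k Q)) \<in> borel_measurable (PiM I (\<lambda>_. borel :: (real^'n) measure))"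
    using Suc.IH Suc.prems(1) by auto
  show ?case by (simp add: Let_def) measurable
qed simp

section \<open>Independence of present and future returns\<close>

locale market = prob_space M for M :: "'w measure" +
  fixes P :: "nat \<Rightarrow> 'w \<Rightarrow> real^'n" and s :: "nat \<Rightarrow> real" and T :: nat
  assumes s_gt1: "\<And>t. t < T \<Longrightarrow> s t > 1"
    and measurable_return: "\<And>t. t < T \<Longrightarrow> P t \<in> borel_measurable M"
    and indep: "indep_vars (\<lambda>_. borel) P {..<T}"
    and abs_cont: "\<And>t. t < T \<Longrightarrow> absolutely_continuous lborel (distr M lborel (P t))"
    and int1: "\<And>t i. t < T \<Longrightarrow> integrable M (\<lambda>\<omega>. P t \<omega> $ i)"
    and int2: "\<And>t i. t < T \<Longrightarrow> integrable M (\<lambda>\<omega>. (P t \<omega> $ i)\<^sup>2)"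
    and no_arb: "\<And>t L. t < T \<Longrightarrow> L \<noteq> 0 \<Longrightarrow>
        \<not> (AE \<omega> in M. P t \<omega> \<bullet> L \<le> 0) \<and> \<not> (AE \<omega> in M. P t \<omega> \<bullet> L \<ge> 0)"
begin

lemma s_pos: "j < T \<Longrightarrow> 0 < s j"
  using s_gt1[of j] by simp

lemma nondegenerate_return_at: "t < T \<Longrightarrow> nondegenerate_return M (P t)"
  unfolding nondegenerate_return_def square_integrable_vector_def
    nondegenerate_return_axioms_def square_integrable_vector_axioms_def
  using prob_space_axioms measurable_return int1 int2 no_arb abs_cont by auto

lemma indep_var_present_future:
  fixes F :: "real^'n \<Rightarrow> real" and g :: "(nat \<Rightarrow> real^'n) \<Rightarrow> real"
  assumes t: "t < T" and F: "F \<in> borel_measurable borel"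
    and g: "g \<in> borel_measurable (PiM {Suc t..<T} (\<lambda>_. borel :: (real^'n) measure))"
  shows "indep_var borel (\<lambda>\<omega>. F (P t \<omega>)) borel (\<lambda>\<omega>. g (restrict (\<lambda>i. P i \<omega>) {Suc t..<T}))"
proof -
  define J where "J = (\<lambda>b::bool. if b then {t} else {Suc t..<T})"
  have "indep_vars (\<lambda>j. PiM (J j) (\<lambda>_. borel :: (real^'n) measure)) (\<lambda>j \<omega>. restrict (\<lambda>i. P i \<omega>) (J j)) UNIV"
    by (rule indep_vars_restrict[OF indep]) (auto simp: J_def disjoint_family_on_def t)
  moreover have "(\<lambda>j. PiM (J j) (\<lambda>_. borel :: (real^'n) measure))
      = case_bool (PiM {t} (\<lambda>_. borel)) (PiM {Suc t..<T} (\<lambda>_. borel))"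
    by (auto simp: J_def fun_eq_iff split: bool.split)
  moreover have "(\<lambda>j \<omega>. restrict (\<lambda>i. P i \<omega>) (J j))
      = case_bool (\<lambda>\<omega>. restrict (\<lambda>i. P i \<omega>) {t}) (\<lambda>\<omega>. restrict (\<lambda>i. P i \<omega>) {Suc t..<T})"
    by (auto simp: J_def fun_eq_iff split: bool.split)
  ultimately have iv: "indep_var (PiM {t} (\<lambda>_. borel :: (real^'n) measure)) (\<lambda>\<omega>. restrict (\<lambda>i. P i \<omega>) {t})
      (PiM {Suc t..<T} (\<lambda>_. borel)) (\<lambda>\<omega>. restrict (\<lambda>i. P i \<omega>) {Suc t..<T})"
    unfolding indep_var_def by simp
  have "(\<lambda>q. F (q t)) \<in> borel_measurable (PiM {t} (\<lambda>_. borel :: (real^'n) measure))"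
    using measurable_compose[OF measurable_component_singleton[of t "{t}" "\<lambda>_. borel"] F] by simp
  from indep_var_compose[OF iv this g] show ?thesis by (simp add: comp_def)
qed

lemma integral_mult_present_future:
  fixes F :: "real^'n \<Rightarrow> real" and g :: "(nat \<Rightarrow> real^'n) \<Rightarrow> real"
  assumes t: "t < T" and F: "F \<in> borel_measurable borel"
    and g: "g \<in> borel_measurable (PiM {Suc t..<T} (\<lambda>_. borel :: (real^'n) measure))"
    and h: "\<And>\<omega>. h \<omega> = g (restrict (\<lambda>i. P i \<omega>) {Suc t..<T})"
    and int_F: "integrable M (\<lambda>\<omega>. F (P t \<omega>))" and int_h: "integrable M h"
  shows "integrable M (\<lambda>\<omega>. F (P t \<omega>) * h \<omega>)
    \<and> integral\<^sup>L M (\<lambda>\<omega>. F (P t \<omega>) * h \<omega>) = integral\<^sup>L M (\<lambda>\<omega>. F (P t \<omega>)) * integral\<^sup>L M h"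
proof -
  have hg: "h = (\<lambda>\<omega>. g (restrict (\<lambda>i. P i \<omega>) {Suc t..<T}))" by (rule ext) (rule h)
  note indep_var_present_future[OF t F g]
  from indep_var_integrable[OF this int_F int_h[unfolded hg]] indep_var_lebesgue_integral[OF this int_F int_h[unfolded hg]]
  show ?thesis unfolding hg by (rule conjI)
qed

text \<open>The slopes depend only on the returns after \<open>t\<close>, so by independence the moments factor.\<close>
lemma moments_two_slope_future:
  fixes g1 g2 :: "(nat \<Rightarrow> real^'n) \<Rightarrow> real" and r c :: real and v :: "real^'n"
  assumes t: "t < T"
    and g1 [measurable]: "g1 \<in> borel_measurable (PiM {Suc t..<T} (\<lambda>_. borel :: (real^'n) measure))"
    and g2 [measurable]: "g2 \<in> borel_measurable (PiM {Suc t..<T} (\<lambda>_. borel :: (real^'n) measure))"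
    and h1: "\<And>\<omega>. h1 \<omega> = g1 (restrict (\<lambda>i. P i \<omega>) {Suc t..<T})"
    and h2: "\<And>\<omega>. h2 \<omega> = g2 (restrict (\<lambda>i. P i \<omega>) {Suc t..<T})"
    and int_h1: "integrable M h1" "integrable M (\<lambda>\<omega>. (h1 \<omega>)\<^sup>2)"
    and int_h2: "integrable M h2" "integrable M (\<lambda>\<omega>. (h2 \<omega>)\<^sup>2)"
  defines "H \<equiv> (\<lambda>\<omega>. two_slope (r + h1 \<omega>) (r + h2 \<omega>) (c + P t \<omega> \<bullet> v))"
  shows "integrable M H" "integrable M (\<lambda>\<omega>. (H \<omega>)\<^sup>2)"
    "integral\<^sup>L M H = (r + integral\<^sup>L M h1) * square_integrable_vector.mean_pos M (P t) c v
       + (r + integral\<^sup>L M h2) * square_integrable_vector.mean_neg M (P t) c v"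
    "integral\<^sup>L M (\<lambda>\<omega>. (H \<omega>)\<^sup>2)
       = (r\<^sup>2 + 2 * r * integral\<^sup>L M h1 + integral\<^sup>L M (\<lambda>\<omega>. (h1 \<omega>)\<^sup>2)) * square_integrable_vector.sqmean_pos M (P t) c v
       + (r\<^sup>2 + 2 * r * integral\<^sup>L M h2 + integral\<^sup>L M (\<lambda>\<omega>. (h2 \<omega>)\<^sup>2)) * square_integrable_vector.sqmean_neg M (P t) c v"
proof -
  interpret X: nondegenerate_return M "P t" by (rule nondegenerate_return_at[OF t])
  let ?R = "\<lambda>\<omega>. restrict (\<lambda>i. P i \<omega>) {Suc t..<T}"
  note factor = integral_mult_present_future[OF t]
  have [measurable]: "P t \<in> borel_measurable M" by (rule measurable_return[OF t])
  have gs1: "(\<lambda>Q. (g1 Q)\<^sup>2) \<in> borel_measurable (PiM {Suc t..<T} (\<lambda>_. borel :: (real^'n) measure))"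
    by measurable
  have gs2: "(\<lambda>Q. (g2 Q)\<^sup>2) \<in> borel_measurable (PiM {Suc t..<T} (\<lambda>_. borel :: (real^'n) measure))"
    by measurable
  have h1s: "(h1 \<omega>)\<^sup>2 = (g1 (?R \<omega>))\<^sup>2" and h2s: "(h2 \<omega>)\<^sup>2 = (g2 (?R \<omega>))\<^sup>2" for \<omega>
    using h1 h2 by simp_all
  have Fm1: "(\<lambda>q. max (c + q \<bullet> v) 0) \<in> borel_measurable borel" by measurable
  have Fm2: "(\<lambda>q. min (c + q \<bullet> v) 0) \<in> borel_measurable borel" by measurable
  have Fm3: "(\<lambda>q. (max (c + q \<bullet> v) 0)\<^sup>2) \<in> borel_measurable borel" by measurable
  have Fm4: "(\<lambda>q. (min (c + q \<bullet> v) 0)\<^sup>2) \<in> borel_measurable borel" by measurable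
  note i = X.integrable_max[of c v] X.integrable_min[of c v]
    X.integrable_max_square[of c v] X.integrable_min_square[of c v]
  note f1 = factor[OF Fm1 g1 h1 i(1) int_h1(1)]
  note f2 = factor[OF Fm2 g2 h2 i(2) int_h2(1)]
  note f3 = factor[OF Fm3 g1 h1 i(3) int_h1(1)]
  note f4 = factor[OF Fm4 g2 h2 i(4) int_h2(1)]
  note f5 = factor[OF Fm3 gs1 h1s i(3) int_h1(2)]
  note f6 = factor[OF Fm4 gs2 h2s i(4) int_h2(2)]
  let ?Zp = "\<lambda>\<omega>. max (c + P t \<omega> \<bullet> v) 0" and ?Zm = "\<lambda>\<omega>. min (c + P t \<omega> \<bullet> v) 0"
  have H: "H = (\<lambda>\<omega>. r * ?Zp \<omega> + r * ?Zm \<omega> + ?Zp \<omega> * h1 \<omega> + ?Zm \<omega> * h2 \<omega>)"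
    unfolding H_def two_slope_def by (simp add: algebra_simps)
  have H2: "(\<lambda>\<omega>. (H \<omega>)\<^sup>2) = (\<lambda>\<omega>. r\<^sup>2 * (?Zp \<omega>)\<^sup>2 + r\<^sup>2 * (?Zm \<omega>)\<^sup>2
      + 2 * r * ((?Zp \<omega>)\<^sup>2 * h1 \<omega>) + 2 * r * ((?Zm \<omega>)\<^sup>2 * h2 \<omega>)
      + (?Zp \<omega>)\<^sup>2 * (h1 \<omega>)\<^sup>2 + (?Zm \<omega>)\<^sup>2 * (h2 \<omega>)\<^sup>2)"
  proof
    fix \<omega>
    show "(H \<omega>)\<^sup>2 = r\<^sup>2 * (?Zp \<omega>)\<^sup>2 + r\<^sup>2 * (?Zm \<omega>)\<^sup>2
      + 2 * r * ((?Zp \<omega>)\<^sup>2 * h1 \<omega>) + 2 * r * ((?Zm \<omega>)\<^sup>2 * h2 \<omega>)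
      + (?Zp \<omega>)\<^sup>2 * (h1 \<omega>)\<^sup>2 + (?Zm \<omega>)\<^sup>2 * (h2 \<omega>)\<^sup>2"
      unfolding H power2_eq_square using max_mult_min_eq_zero[of "c + P t \<omega> \<bullet> v"]
      by (simp add: algebra_simps)
  qed
  show "integrable M H" unfolding H using f1 f2 i by auto
  show "integrable M (\<lambda>\<omega>. (H \<omega>)\<^sup>2)" unfolding H2 using f3 f4 f5 f6 i by auto
  show "integral\<^sup>L M H = (r + integral\<^sup>L M h1) * X.mean_pos c v + (r + integral\<^sup>L M h2) * X.mean_neg c v"
    unfolding H X.mean_pos_def X.mean_neg_def using f1 f2 i by (simp add: algebra_simps)
  show "integral\<^sup>L M (\<lambda>\<omega>. (H \<omega>)\<^sup>2)
      = (r\<^sup>2 + 2 * r * integral\<^sup>L M h1 + integral\<^sup>L M (\<lambda>\<omega>. (h1 \<omega>)\<^sup>2)) * X.sqmean_pos c v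
      + (r\<^sup>2 + 2 * r * integral\<^sup>L M h2 + integral\<^sup>L M (\<lambda>\<omega>. (h2 \<omega>)\<^sup>2)) * X.sqmean_neg c v"
    unfolding H2 X.sqmean_pos_def X.sqmean_neg_def using f3 f4 f5 f6 i by simp (simp add: algebra_simps)
qed

end

definition has_moments :: "'a measure \<Rightarrow> ('a \<Rightarrow> real) \<Rightarrow> real \<Rightarrow> real \<Rightarrow> bool" where
  "has_moments M h a b \<longleftrightarrow> integrable M h \<and> integrable M (\<lambda>\<omega>. (h \<omega>)\<^sup>2)
     \<and> integral\<^sup>L M h = a \<and> integral\<^sup>L M (\<lambda>\<omega>. (h \<omega>)\<^sup>2) = b"

lemma (in prob_space) has_moments_var: "has_moments M h a b \<Longrightarrow> var M h = b - a\<^sup>2"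
  unfolding has_moments_def using var_eq_moments by auto

context market
begin

lemma has_moments_gain_step:
  fixes g1 g2 :: "(nat \<Rightarrow> real^'n) \<Rightarrow> real" and K :: "real^'n"
  assumes t: "t < T"
    and g1: "g1 \<in> borel_measurable (PiM {Suc t..<T} (\<lambda>_. borel :: (real^'n) measure))"
    and g2: "g2 \<in> borel_measurable (PiM {Suc t..<T} (\<lambda>_. borel :: (real^'n) measure))"
    and h1: "\<And>\<omega>. h1 \<omega> = g1 (restrict (\<lambda>i. P i \<omega>) {Suc t..<T})"
    and h2: "\<And>\<omega>. h2 \<omega> = g2 (restrict (\<lambda>i. P i \<omega>) {Suc t..<T})"
    and m1: "has_moments M h1 a1 b1" and m2: "has_moments M h2 a2 b2"
  defines "r \<equiv> rho s T (Suc t)"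
  shows "has_moments M (\<lambda>\<omega>. r * (P t \<omega> \<bullet> K) + two_slope (h1 \<omega>) (h2 \<omega>) (s t + P t \<omega> \<bullet> K))
    (r * (mean_vec M (P t) \<bullet> K) + a1 * integral\<^sup>L M (\<lambda>\<omega>. max (s t + P t \<omega> \<bullet> K) 0)
       + a2 * integral\<^sup>L M (\<lambda>\<omega>. min (s t + P t \<omega> \<bullet> K) 0))
    (r\<^sup>2 * (K \<bullet> (second_moment M (P t) *v K))
       + 2 * r * (a1 * integral\<^sup>L M (\<lambda>\<omega>. (P t \<omega> \<bullet> K) * max (s t + P t \<omega> \<bullet> K) 0))
       + 2 * r * (a2 * integral\<^sup>L M (\<lambda>\<omega>. (P t \<omega> \<bullet> K) * min (s t + P t \<omega> \<bullet> K) 0))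
       + b1 * integral\<^sup>L M (\<lambda>\<omega>. (max (s t + P t \<omega> \<bullet> K) 0)\<^sup>2)
       + b2 * integral\<^sup>L M (\<lambda>\<omega>. (min (s t + P t \<omega> \<bullet> K) 0)\<^sup>2))"
proof -
  interpret X: nondegenerate_return M "P t" by (rule nondegenerate_return_at[OF t])
  define H where "H = (\<lambda>\<omega>. two_slope (r + h1 \<omega>) (r + h2 \<omega>) (s t + P t \<omega> \<bullet> K))"
  note mom = moments_two_slope_future[OF t g1 g2 h1 h2, of r "s t" K]
  have i: "integrable M h1" "integrable M (\<lambda>\<omega>. (h1 \<omega>)\<^sup>2)" "integrable M h2" "integrable M (\<lambda>\<omega>. (h2 \<omega>)\<^sup>2)"
    and e: "integral\<^sup>L M h1 = a1" "integral\<^sup>L M (\<lambda>\<omega>. (h1 \<omega>)\<^sup>2) = b1"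
      "integral\<^sup>L M h2 = a2" "integral\<^sup>L M (\<lambda>\<omega>. (h2 \<omega>)\<^sup>2) = b2"
    using m1 m2 unfolding has_moments_def by auto
  have iH: "integrable M H" "integrable M (\<lambda>\<omega>. (H \<omega>)\<^sup>2)"
    and eH: "integral\<^sup>L M H = (r + a1) * X.mean_pos (s t) K + (r + a2) * X.mean_neg (s t) K"
      "integral\<^sup>L M (\<lambda>\<omega>. (H \<omega>)\<^sup>2) = (r\<^sup>2 + 2 * r * a1 + b1) * X.sqmean_pos (s t) K
         + (r\<^sup>2 + 2 * r * a2 + b2) * X.sqmean_neg (s t) K"
    using mom[OF i] unfolding H_def e by simp_all
  have G: "(\<lambda>\<omega>. r * (P t \<omega> \<bullet> K) + two_slope (h1 \<omega>) (h2 \<omega>) (s t + P t \<omega> \<bullet> K)) = (\<lambda>\<omega>. H \<omega> - r * s t)"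
    unfolding H_def add_two_slope[symmetric] by (simp add: algebra_simps)
  have E1: "integral\<^sup>L M (\<lambda>\<omega>. H \<omega> - r * s t)
      = (r + a1) * X.mean_pos (s t) K + (r + a2) * X.mean_neg (s t) K - r * s t"
    using iH by (simp add: prob_space eH)
  have E2: "integral\<^sup>L M (\<lambda>\<omega>. (H \<omega> - r * s t)\<^sup>2)
      = (r\<^sup>2 + 2 * r * a1 + b1) * X.sqmean_pos (s t) K + (r\<^sup>2 + 2 * r * a2 + b2) * X.sqmean_neg (s t) K
        - 2 * (r * s t) * ((r + a1) * X.mean_pos (s t) K + (r + a2) * X.mean_neg (s t) K) + (r * s t)\<^sup>2"
    using integral_square_diff_const[OF iH] unfolding eH .
  have parts: "integral\<^sup>L M (\<lambda>\<omega>. max (s t + P t \<omega> \<bullet> K) 0) = X.mean_pos (s t) K"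
    "integral\<^sup>L M (\<lambda>\<omega>. min (s t + P t \<omega> \<bullet> K) 0) = X.mean_neg (s t) K"
    "integral\<^sup>L M (\<lambda>\<omega>. (max (s t + P t \<omega> \<bullet> K) 0)\<^sup>2) = X.sqmean_pos (s t) K"
    "integral\<^sup>L M (\<lambda>\<omega>. (min (s t + P t \<omega> \<bullet> K) 0)\<^sup>2) = X.sqmean_neg (s t) K"
    by (simp_all add: X.mean_pos_def X.mean_neg_def X.sqmean_pos_def X.sqmean_neg_def)
  have mean: "mean_vec M (P t) \<bullet> K = X.mean_pos (s t) K + X.mean_neg (s t) K - s t"
    using X.mean_pos_add_mean_neg[of "s t" K] by simp
  show ?thesis
    unfolding has_moments_def G E1 E2 parts mean X.integral_inner_mult_max X.integral_inner_mult_min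
      X.quadratic_form_second_moment[of K "s t"]
    using iH integrable_square_diff_const[OF iH] by (simp add: power2_eq_square algebra_simps)
qed

end

locale tc_recursion = market M P s T
  for M :: "'w measure" and P :: "nat \<Rightarrow> 'w \<Rightarrow> real^'n" and s T +
  fixes gp gm :: "nat \<Rightarrow> real" and Kp Km :: "nat \<Rightarrow> real^'n" and ap am bp bm :: "nat \<Rightarrow> real"
    and t0 :: nat
  assumes recursion: "recursion_from M s P T gp gm Kp Km ap am bp bm t0"
begin

lemma recursion_step_at: "t0 \<le> t \<Longrightarrow> t < T \<Longrightarrow> recursion_step M s P T gp gm Kp Km ap am bp bm t"
  using recursion unfolding recursion_from_def by blast

definition gain_pos :: "nat \<Rightarrow> 'w \<Rightarrow> real" where
  "gain_pos t \<omega> = fst (tc_gains s T Kp Km (T - t) (\<lambda>i. P i \<omega>))"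

definition gain_neg :: "nat \<Rightarrow> 'w \<Rightarrow> real" where
  "gain_neg t \<omega> = snd (tc_gains s T Kp Km (T - t) (\<lambda>i. P i \<omega>))"

lemma gains_future:
  assumes "t \<le> T"
  shows "gain_pos t \<omega> = fst (tc_gains s T Kp Km (T - t) (restrict (\<lambda>i. P i \<omega>) {t..<T}))"
    and "gain_neg t \<omega> = snd (tc_gains s T Kp Km (T - t) (restrict (\<lambda>i. P i \<omega>) {t..<T}))"
  unfolding gain_pos_def gain_neg_def using assms
  by (subst tc_gains_local[where Q'="restrict (\<lambda>i. P i \<omega>) {t..<T}"]; auto)+

lemma gains_measurable:
  assumes "t \<le> T"
  shows "(\<lambda>Q. fst (tc_gains s T Kp Km (T - t) Q)) \<in> borel_measurable (PiM {t..<T} (\<lambda>_. borel :: (real^'n) measure))"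
    and "(\<lambda>Q. snd (tc_gains s T Kp Km (T - t) Q)) \<in> borel_measurable (PiM {t..<T} (\<lambda>_. borel :: (real^'n) measure))"
  using tc_gains_measurable[of "T - t" T "{t..<T}"] assms by auto

lemma
  assumes "t < T"
  shows gain_pos_Suc: "gain_pos t \<omega> = rho s T (Suc t) * (P t \<omega> \<bullet> Kp t)
      + two_slope (gain_pos (Suc t) \<omega>) (gain_neg (Suc t) \<omega>) (s t + P t \<omega> \<bullet> Kp t)"
    and gain_neg_Suc: "gain_neg t \<omega> = rho s T (Suc t) * (P t \<omega> \<bullet> Km t)
      + two_slope (gain_neg (Suc t) \<omega>) (gain_pos (Suc t) \<omega>) (s t + P t \<omega> \<bullet> Km t)"
proof -
  have "T - t = Suc (T - Suc t)" "T - Suc (T - Suc t) = t" using assms by auto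
  then show "gain_pos t \<omega> = rho s T (Suc t) * (P t \<omega> \<bullet> Kp t)
      + two_slope (gain_pos (Suc t) \<omega>) (gain_neg (Suc t) \<omega>) (s t + P t \<omega> \<bullet> Kp t)"
    "gain_neg t \<omega> = rho s T (Suc t) * (P t \<omega> \<bullet> Km t)
      + two_slope (gain_neg (Suc t) \<omega>) (gain_pos (Suc t) \<omega>) (s t + P t \<omega> \<bullet> Km t)"
    unfolding gain_pos_def gain_neg_def by (simp_all add: Let_def)
qed

lemma has_moments_gains:
  assumes "t0 \<le> t" "t \<le> T"
  shows "has_moments M (gain_pos t) (ap t) (bp t) \<and> has_moments M (gain_neg t) (am t) (bm t)"
  using assms(2)
proof (induction rule: inc_induct)
  case base
  then show ?case using recursion by (simp add: recursion_from_def has_moments_def gain_pos_def gain_neg_def)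
next
  case (step n)
  have n: "n < T" and sn: "Suc n \<le> T" using step by auto
  note g = gains_measurable[OF sn] and h = gains_future[OF sn]
  note IH = step.IH[THEN conjunct1] step.IH[THEN conjunct2]
  have rs: "recursion_step M s P T gp gm Kp Km ap am bp bm n"
    using recursion_step_at assms(1) step.hyps(1) n by simp
  have "(\<lambda>\<omega>. gain_pos n \<omega>) = (\<lambda>\<omega>. rho s T (Suc n) * (P n \<omega> \<bullet> Kp n)
      + two_slope (gain_pos (Suc n) \<omega>) (gain_neg (Suc n) \<omega>) (s n + P n \<omega> \<bullet> Kp n))"
    "(\<lambda>\<omega>. gain_neg n \<omega>) = (\<lambda>\<omega>. rho s T (Suc n) * (P n \<omega> \<bullet> Km n)
      + two_slope (gain_neg (Suc n) \<omega>) (gain_pos (Suc n) \<omega>) (s n + P n \<omega> \<bullet> Km n))"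
    using gain_pos_Suc[OF n] gain_neg_Suc[OF n] by auto
  with has_moments_gain_step[OF n g(1,2) h(1,2) IH, of "Kp n"]
    has_moments_gain_step[OF n g(2,1) h(2,1) IH(2,1), of "Km n"] rs
  show ?case
    unfolding recursion_step_def Let_def mult_of_bool_sign integral_mult_right_zero
    by (simp add: ac_simps)
qed

lemma var_gains:
  assumes "t0 \<le> t" "t \<le> T"
  shows "var M (gain_pos t) = bp t - (ap t)\<^sup>2" "var M (gain_neg t) = bm t - (am t)\<^sup>2"
  using has_moments_gains[OF assms] has_moments_var by auto

lemma variance_terms_nonneg:
  assumes "t0 \<le> t" "t \<le> T"
  shows "0 \<le> bp t - (ap t)\<^sup>2" "0 \<le> bm t - (am t)\<^sup>2"
  using var_gains[OF assms] var_nonneg by metis+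

end

context market
begin

lemma
  assumes t: "t < T"
    and vp: "0 \<le> bp (Suc t) - (ap (Suc t))\<^sup>2" and vm: "0 \<le> bm (Suc t) - (am (Suc t))\<^sup>2"
  defines "r \<equiv> rho s T (Suc t)"
  shows Fplus_eq_mv_cost: "Fplus M s P T ap am bp bm gp t K
      = square_integrable_vector.mv_cost M (P t) (r + ap (Suc t)) (r + am (Suc t))
          (sqrt (bp (Suc t) - (ap (Suc t))\<^sup>2)) (sqrt (bm (Suc t) - (am (Suc t))\<^sup>2)) (s t) (gp t) K"
    and Fminus_eq_mv_cost: "Fminus M s P T ap am bp bm gm t K
      = square_integrable_vector.mv_cost M (P t) (r + am (Suc t)) (r + ap (Suc t))
          (sqrt (bm (Suc t) - (am (Suc t))\<^sup>2)) (sqrt (bp (Suc t) - (ap (Suc t))\<^sup>2)) (s t) (- gm t) K"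
proof -
  interpret X: nondegenerate_return M "P t" by (rule nondegenerate_return_at[OF t])
  have parts: "integral\<^sup>L M (\<lambda>\<omega>. max (s t + P t \<omega> \<bullet> K) 0) = X.mean_pos (s t) K"
    "integral\<^sup>L M (\<lambda>\<omega>. min (s t + P t \<omega> \<bullet> K) 0) = X.mean_neg (s t) K"
    "integral\<^sup>L M (\<lambda>\<omega>. (max (s t + P t \<omega> \<bullet> K) 0)\<^sup>2) = X.sqmean_pos (s t) K"
    "integral\<^sup>L M (\<lambda>\<omega>. (min (s t + P t \<omega> \<bullet> K) 0)\<^sup>2) = X.sqmean_neg (s t) K"
    by (simp_all add: X.mean_pos_def X.mean_neg_def X.sqmean_pos_def X.sqmean_neg_def)
  have mean: "s t + mean_vec M (P t) \<bullet> K = X.mean_pos (s t) K + X.mean_neg (s t) K"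
    using X.mean_pos_add_mean_neg[of "s t" K] by simp
  note unfold = Let_def mult_of_bool_sign integral_mult_right_zero parts mean r_def[symmetric]
    X.quadratic_form_cov_eq[of K "s t"] X.mv_cost_eq real_sqrt_pow2[OF vp] real_sqrt_pow2[OF vm]
  show "Fplus M s P T ap am bp bm gp t K
      = X.mv_cost (r + ap (Suc t)) (r + am (Suc t))
          (sqrt (bp (Suc t) - (ap (Suc t))\<^sup>2)) (sqrt (bm (Suc t) - (am (Suc t))\<^sup>2)) (s t) (gp t) K"
    unfolding Fplus_def unfold by (simp add: power2_eq_square algebra_simps)
  show "Fminus M s P T ap am bp bm gm t K
      = X.mv_cost (r + am (Suc t)) (r + ap (Suc t))
          (sqrt (bm (Suc t) - (am (Suc t))\<^sup>2)) (sqrt (bp (Suc t) - (ap (Suc t))\<^sup>2)) (s t) (- gm t) K"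
    unfolding Fminus_def unfold by (simp add: power2_eq_square algebra_simps)
qed

end

context tc_recursion
begin

lemma terminal_dev_tc_policy:
  assumes t: "t < T"
  defines "r \<equiv> rho s T (Suc t)"
  shows "terminal_dev s P (tc_policy s T W Kp Km) T t x v \<omega>
    = W + two_slope (r + gain_pos (Suc t) \<omega>) (r + gain_neg (Suc t) \<omega>) (s t * (x - W / rho s T t) + P t \<omega> \<bullet> v)"
proof -
  define y where "y = s t * x + P t \<omega> \<bullet> v"
  have r0: "0 < r" unfolding r_def by (rule rho_pos) (rule s_pos)
  have "y - W / r = s t * (x - W / rho s T t) + P t \<omega> \<bullet> v"
    unfolding y_def r_def rho_Suc[OF t] using s_pos[OF t] r0 r_def by (simp add: field_simps)
  moreover have "terminal_dev s P (tc_policy s T W Kp Km) T t x v \<omega>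
      = r * y + two_slope (gain_pos (Suc t) \<omega>) (gain_neg (Suc t) \<omega>) (y - W / r)"
    using wealth_tc_policy[where s=s and T=T and t="Suc t" and k="T - Suc t", OF s_pos] t
    unfolding terminal_dev_def y_def gain_pos_def gain_neg_def r_def by simp
  moreover have "r * y = W + r * (y - W / r)" using r0 by (simp add: field_simps)
  ultimately show ?thesis by (simp add: add_two_slope)
qed

lemma nested_objective_eq_mv_cost:
  assumes t: "t < T" and t0: "t0 \<le> Suc t"
  defines "r \<equiv> rho s T (Suc t)"
  shows "var M (terminal_dev s P (tc_policy s T W Kp Km) T t x v)
      - g * integral\<^sup>L M (terminal_dev s P (tc_policy s T W Kp Km) T t x v)
    = square_integrable_vector.mv_cost M (P t) (r + ap (Suc t)) (r + am (Suc t))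
        (sqrt (bp (Suc t) - (ap (Suc t))\<^sup>2)) (sqrt (bm (Suc t) - (am (Suc t))\<^sup>2))
        (s t * (x - W / rho s T t)) g v - g * W"
proof -
  interpret X: nondegenerate_return M "P t" by (rule nondegenerate_return_at[OF t])
  define c where "c = s t * (x - W / rho s T t)"
  define H where "H = (\<lambda>\<omega>. two_slope (r + gain_pos (Suc t) \<omega>) (r + gain_neg (Suc t) \<omega>) (c + P t \<omega> \<bullet> v))"
  have sn: "Suc t \<le> T" using t by simp
  have m: "has_moments M (gain_pos (Suc t)) (ap (Suc t)) (bp (Suc t))"
      "has_moments M (gain_neg (Suc t)) (am (Suc t)) (bm (Suc t))"
    using has_moments_gains[OF t0 sn] by auto
  note mom = moments_two_slope_future[OF t gains_measurable[OF sn] gains_future[OF sn], of r c v]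
  have iH: "integrable M H" "integrable M (\<lambda>\<omega>. (H \<omega>)\<^sup>2)"
    and eH: "integral\<^sup>L M H = (r + ap (Suc t)) * X.mean_pos c v + (r + am (Suc t)) * X.mean_neg c v"
      "integral\<^sup>L M (\<lambda>\<omega>. (H \<omega>)\<^sup>2) = (r\<^sup>2 + 2 * r * ap (Suc t) + bp (Suc t)) * X.sqmean_pos c v
         + (r\<^sup>2 + 2 * r * am (Suc t) + bm (Suc t)) * X.sqmean_neg c v"
    using m mom unfolding H_def has_moments_def by auto
  have "terminal_dev s P (tc_policy s T W Kp Km) T t x v = (\<lambda>\<omega>. W + H \<omega>)"
    using terminal_dev_tc_policy[OF t] unfolding H_def r_def c_def by auto
  moreover have "var M (\<lambda>\<omega>. W + H \<omega>) = integral\<^sup>L M (\<lambda>\<omega>. (H \<omega>)\<^sup>2) - (integral\<^sup>L M H)\<^sup>2"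
    using var_add_const[OF iH(1)] var_eq_moments[OF iH] by simp
  moreover have "integral\<^sup>L M (\<lambda>\<omega>. W + H \<omega>) = W + integral\<^sup>L M H" using iH(1) by (simp add: prob_space)
  moreover note variance_terms_nonneg[OF t0 sn]
  ultimately show ?thesis
    unfolding c_def[symmetric] X.mv_cost_eq eH by (simp add: power2_eq_square algebra_simps)
qed

end

section \<open>Time consistency\<close>

context square_integrable_vector
begin

lemma mv_cost_scaled_minimizer_pos:
  assumes d: "0 < d" and min: "\<And>K. mv_cost a b c e s (\<gamma> / d) K0 \<le> mv_cost a b c e s (\<gamma> / d) K"
  shows "mv_cost a b c e (d * s) \<gamma> (d *\<^sub>R K0) \<le> mv_cost a b c e (d * s) \<gamma> v"
proof -
  have "d\<^sup>2 * mv_cost a b c e s (\<gamma> / d) K0 \<le> d\<^sup>2 * mv_cost a b c e s (\<gamma> / d) ((1 / d) *\<^sub>R v)"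
    using min by (intro mult_left_mono) auto
  then show ?thesis using d by (simp add: mv_cost_scale)
qed

lemma mv_cost_scaled_minimizer_neg:
  assumes d: "d < 0" and min: "\<And>K. mv_cost b a e c s (\<gamma> / d) K0 \<le> mv_cost b a e c s (\<gamma> / d) K"
  shows "mv_cost a b c e (d * s) \<gamma> (d *\<^sub>R K0) \<le> mv_cost a b c e (d * s) \<gamma> v"
proof -
  have "d\<^sup>2 * mv_cost b a e c s (\<gamma> / d) K0 \<le> d\<^sup>2 * mv_cost b a e c s (\<gamma> / d) ((1 / d) *\<^sub>R v)"
    using min by (intro mult_left_mono) auto
  then show ?thesis using d by (simp add: mv_cost_scale)
qed

end

context tc_recursion
begin

text \<open>The nested objective is \<open>mv_cost\<close> at shift \<open>d s\<^sub>t\<close> with \<open>d = x - W / \<rho>\<^sub>t\<close>, while \<open>F\<^sub>t\<^sup>\<plusminus>\<close> is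
  \<open>mv_cost\<close> at shift \<open>s\<^sub>t\<close>; by homogeneity \<open>d K\<^sub>t\<^sup>+\<close> (for \<open>d > 0\<close>) resp. \<open>d K\<^sub>t\<^sup>-\<close> (for \<open>d < 0\<close>) is optimal.\<close>
lemma tc_policy_optimal_step:
  fixes x W :: real
  assumes t0: "t0 \<le> t" and t: "t < T"
  defines "J \<equiv> \<lambda>v. var M (terminal_dev s P (tc_policy s T W Kp Km) T t x v)
    - gamma_beh s T W gp gm t x * integral\<^sup>L M (terminal_dev s P (tc_policy s T W Kp Km) T t x v)"
  shows "J (tc_policy s T W Kp Km t x) \<le> J v"
proof -
  interpret X: nondegenerate_return M "P t" by (rule nondegenerate_return_at[OF t])
  have t0': "t0 \<le> Suc t" using t0 by simp
  have vn: "0 \<le> bp (Suc t) - (ap (Suc t))\<^sup>2" "0 \<le> bm (Suc t) - (am (Suc t))\<^sup>2"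
    using variance_terms_nonneg[OF t0'] t by auto
  have rs: "recursion_step M s P T gp gm Kp Km ap am bp bm t" by (rule recursion_step_at[OF t0 t])
  define r where "r = rho s T (Suc t)"
  define cp where "cp = sqrt (bp (Suc t) - (ap (Suc t))\<^sup>2)"
  define cm where "cm = sqrt (bm (Suc t) - (am (Suc t))\<^sup>2)"
  define d where "d = x - W / rho s T t"
  define \<gamma> where "\<gamma> = gamma_beh s T W gp gm t x"
  have J: "J v = X.mv_cost (r + ap (Suc t)) (r + am (Suc t)) cp cm (d * s t) \<gamma> v - \<gamma> * W" for v
    using nested_objective_eq_mv_cost[OF t t0', where x=x and g=\<gamma> and v=v and W=W]
    unfolding J_def r_def cp_def cm_def d_def \<gamma>_def by (simp add: mult.commute)
  have minp: "X.mv_cost (r + ap (Suc t)) (r + am (Suc t)) cp cm (s t) (gp t) (Kp t)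
      \<le> X.mv_cost (r + ap (Suc t)) (r + am (Suc t)) cp cm (s t) (gp t) K" for K
    using rs unfolding recursion_step_def Let_def Fplus_eq_mv_cost[where ap=ap and am=am and bp=bp and bm=bm, OF t vn] r_def cp_def cm_def by blast
  have minm: "X.mv_cost (r + am (Suc t)) (r + ap (Suc t)) cm cp (s t) (- gm t) (Km t)
      \<le> X.mv_cost (r + am (Suc t)) (r + ap (Suc t)) cm cp (s t) (- gm t) K" for K
    using rs unfolding recursion_step_def Let_def Fminus_eq_mv_cost[where ap=ap and am=am and bp=bp and bm=bm, OF t vn] r_def cp_def cm_def by blast
  consider "0 < d" | "d = 0" | "d < 0" by linarith
  then show ?thesis
  proof cases
    case 1
    then have "tc_policy s T W Kp Km t x = d *\<^sub>R Kp t" "\<gamma> / d = gp t"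
      unfolding tc_policy_def \<gamma>_def gamma_beh_def d_def by auto
    then show ?thesis unfolding J using X.mv_cost_scaled_minimizer_pos[OF 1] minp by simp
  next
    case 2
    then have "tc_policy s T W Kp Km t x = 0" "\<gamma> = 0"
      unfolding tc_policy_def \<gamma>_def gamma_beh_def d_def by auto
    then show ?thesis
      unfolding J using 2 X.mv_cost_unshifted_nonneg X.mv_cost_unshifted_homogeneous[of 0] by simp
  next
    case 3
    then have "tc_policy s T W Kp Km t x = d *\<^sub>R Km t" "\<gamma> / d = - gm t"
      unfolding tc_policy_def \<gamma>_def gamma_beh_def d_def by auto
    then show ?thesis unfolding J using X.mv_cost_scaled_minimizer_neg[OF 3] minm by simp
  qed
qed

lemma tc_policy_time_consistent:
  assumes "t0 = 0"
  shows "time_consistent M s P T (gamma_beh s T W gp gm) (tc_policy s T W Kp Km)"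
  unfolding time_consistent_def using tc_policy_optimal_step assms by blast

lemma terminal_wealth_moments:
  fixes x0 W :: real
  assumes "t0 = 0"
  defines "d \<equiv> x0 - W / rho s T 0"
  shows "integral\<^sup>L M (wealth s P (tc_policy s T W Kp Km) 0 T x0)
           = rho s T 0 * x0 + ap 0 * d * of_bool (x0 \<ge> W / rho s T 0) + am 0 * d * of_bool (x0 < W / rho s T 0)"
    and "var M (wealth s P (tc_policy s T W Kp Km) 0 T x0)
           = ((bp 0 - (ap 0)\<^sup>2) * of_bool (x0 \<ge> W / rho s T 0)
              + (bm 0 - (am 0)\<^sup>2) * of_bool (x0 < W / rho s T 0)) * d\<^sup>2"
proof -
  have m: "has_moments M (gain_pos 0) (ap 0) (bp 0)" "has_moments M (gain_neg 0) (am 0) (bm 0)"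
    using has_moments_gains[of 0] assms(1) by auto
  have v: "var M (gain_pos 0) = bp 0 - (ap 0)\<^sup>2" "var M (gain_neg 0) = bm 0 - (am 0)\<^sup>2"
    using var_gains[of 0] assms(1) by auto
  define h where "h = (if d \<ge> 0 then gain_pos 0 else gain_neg 0)"
  have "wealth s P (tc_policy s T W Kp Km) 0 T x0 \<omega> = rho s T 0 * x0 + d * h \<omega>" for \<omega>
    using wealth_tc_policy[where s=s and T=T and t=0 and k=T and P=P and W=W and Kp=Kp and Km=Km
        and x=x0 and \<omega>=\<omega>, OF s_pos]
    unfolding h_def d_def gain_pos_def gain_neg_def by (simp add: two_slope_if mult.commute)
  then have "wealth s P (tc_policy s T W Kp Km) 0 T x0 = (\<lambda>\<omega>. rho s T 0 * x0 + d * h \<omega>)" ..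
  moreover have "integrable M h" using m unfolding h_def has_moments_def by simp
  ultimately show "integral\<^sup>L M (wealth s P (tc_policy s T W Kp Km) 0 T x0)
           = rho s T 0 * x0 + ap 0 * d * of_bool (x0 \<ge> W / rho s T 0) + am 0 * d * of_bool (x0 < W / rho s T 0)"
    and "var M (wealth s P (tc_policy s T W Kp Km) 0 T x0)
           = ((bp 0 - (ap 0)\<^sup>2) * of_bool (x0 \<ge> W / rho s T 0)
              + (bm 0 - (am 0)\<^sup>2) * of_bool (x0 < W / rho s T 0)) * d\<^sup>2"
    using m v var_add_const var_scale[of M d h]
    by (auto simp: h_def d_def prob_space has_moments_def)
qed

end

section \<open>Solvability of the recursion\<close>

lemma Fplus_cong:
  "ap (Suc t) = ap' (Suc t) \<Longrightarrow> am (Suc t) = am' (Suc t) \<Longrightarrow> bp (Suc t) = bp' (Suc t) \<Longrightarrow> bm (Suc t) = bm' (Suc t)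
   \<Longrightarrow> Fplus M s P T ap am bp bm gp t K = Fplus M s P T ap' am' bp' bm' gp t K"
  unfolding Fplus_def by simp

lemma Fminus_cong:
  "ap (Suc t) = ap' (Suc t) \<Longrightarrow> am (Suc t) = am' (Suc t) \<Longrightarrow> bp (Suc t) = bp' (Suc t) \<Longrightarrow> bm (Suc t) = bm' (Suc t)
   \<Longrightarrow> Fminus M s P T ap am bp bm gm t K = Fminus M s P T ap' am' bp' bm' gm t K"
  unfolding Fminus_def by simp

lemma recursion_step_cong:
  assumes "\<And>i. i \<in> {t, Suc t} \<Longrightarrow> ap i = ap' i \<and> am i = am' i \<and> bp i = bp' i \<and> bm i = bm' i"
    and "Kp t = Kp' t" "Km t = Km' t"
  shows "recursion_step M s P T gp gm Kp Km ap am bp bm t = recursion_step M s P T gp gm Kp' Km' ap' am' bp' bm' t"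
proof -
  have "Fplus M s P T ap am bp bm gp t = Fplus M s P T ap' am' bp' bm' gp t"
    "Fminus M s P T ap am bp bm gm t = Fminus M s P T ap' am' bp' bm' gm t"
    using assms(1)[of "Suc t"] by (auto intro!: ext Fplus_cong Fminus_cong)
  with assms show ?thesis unfolding recursion_step_def by simp
qed

context market
begin

lemma minimizers_exist:
  assumes t: "t < T" and rec: "recursion_from M s P T gp gm Kp Km ap am bp bm (Suc t)"
  shows "(\<exists>K. \<forall>K'. Fplus M s P T ap am bp bm gp t K \<le> Fplus M s P T ap am bp bm gp t K')
       \<and> (\<exists>K. \<forall>K'. Fminus M s P T ap am bp bm gm t K \<le> Fminus M s P T ap am bp bm gm t K')"
proof -
  interpret X: nondegenerate_return M "P t" by (rule nondegenerate_return_at[OF t])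
  interpret R: tc_recursion M P s T gp gm Kp Km ap am bp bm "Suc t" by unfold_locales (rule rec)
  have vn: "0 \<le> bp (Suc t) - (ap (Suc t))\<^sup>2" "0 \<le> bm (Suc t) - (am (Suc t))\<^sup>2"
    using R.variance_terms_nonneg[of "Suc t"] t by auto
  show ?thesis
    unfolding Fplus_eq_mv_cost[where ap=ap and am=am and bp=bp and bm=bm, OF t vn]
      Fminus_eq_mv_cost[where ap=ap and am=am and bp=bp and bm=bm, OF t vn]
    using X.mv_cost_attains_min by blast
qed

text \<open>A solution from \<open>Suc t\<close> on extends to one from \<open>t\<close> on by redefining all sequences at \<open>t\<close>
  only: step \<open>t' > t\<close> of the recursion does not look at index \<open>t\<close>.\<close>
lemma recursion_from_extend:
  assumes t: "t < T" and rec: "recursion_from M s P T gp gm Kp Km ap am bp bm (Suc t)"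
  shows "\<exists>Kp' Km' ap' am' bp' bm'. recursion_from M s P T gp gm Kp' Km' ap' am' bp' bm' t"
proof -
  obtain K1 K2
    where K1: "\<forall>K'. Fplus M s P T ap am bp bm gp t K1 \<le> Fplus M s P T ap am bp bm gp t K'"
      and K2: "\<forall>K'. Fminus M s P T ap am bp bm gm t K2 \<le> Fminus M s P T ap am bp bm gm t K'"
    using minimizers_exist[OF t rec] by blast
  have Fp: "Fplus M s P T (ap(t := x1)) (am(t := x2)) (bp(t := x3)) (bm(t := x4)) gp t K
      = Fplus M s P T ap am bp bm gp t K"
    and Fm: "Fminus M s P T (ap(t := x1)) (am(t := x2)) (bp(t := x3)) (bm(t := x4)) gm t K
      = Fminus M s P T ap am bp bm gm t K" for x1 x2 x3 x4 K
    by (intro Fplus_cong Fminus_cong; simp)+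
  have "\<exists>x1 x2 x3 x4. recursion_step M s P T gp gm (Kp(t := K1)) (Km(t := K2))
      (ap(t := x1)) (am(t := x2)) (bp(t := x3)) (bm(t := x4)) t"
    using K1 K2 unfolding recursion_step_def Let_def Fp Fm by simp
  then obtain x1 x2 x3 x4 where step: "recursion_step M s P T gp gm (Kp(t := K1)) (Km(t := K2))
      (ap(t := x1)) (am(t := x2)) (bp(t := x3)) (bm(t := x4)) t"
    by blast
  have "recursion_step M s P T gp gm (Kp(t := K1)) (Km(t := K2))
      (ap(t := x1)) (am(t := x2)) (bp(t := x3)) (bm(t := x4)) t'" if "t \<le> t'" "t' < T" for t'
  proof (cases "t' = t")
    case False
    then have "recursion_step M s P T gp gm (Kp(t := K1)) (Km(t := K2))
        (ap(t := x1)) (am(t := x2)) (bp(t := x3)) (bm(t := x4)) t'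
      = recursion_step M s P T gp gm Kp Km ap am bp bm t'"
      using that by (intro recursion_step_cong) auto
    then show ?thesis using rec that False unfolding recursion_from_def by simp
  qed (use step in simp)
  then have "recursion_from M s P T gp gm (Kp(t := K1)) (Km(t := K2))
      (ap(t := x1)) (am(t := x2)) (bp(t := x3)) (bm(t := x4)) t"
    using rec t unfolding recursion_from_def by auto
  then show ?thesis by blast
qed

lemma recursion_solvable: "\<exists>Kp Km ap am bp bm. recursion_from M s P T gp gm Kp Km ap am bp bm 0"
proof -
  have "\<exists>Kp Km ap am bp bm. recursion_from M s P T gp gm Kp Km ap am bp bm (T - k)" if "k \<le> T" for k
    using that
  proof (induction k)
    case 0
    have "recursion_from M s P T gp gm Kp Km (\<lambda>_. 0) (\<lambda>_. 0) (\<lambda>_. 0) (\<lambda>_. 0) T" for Kp Km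
      unfolding recursion_from_def by auto
    then show ?case unfolding diff_zero by blast
  next
    case (Suc k)
    then have t: "T - Suc k < T" and t_Suc: "T - k = Suc (T - Suc k)" by auto
    from Suc obtain Kp Km ap am bp bm where "recursion_from M s P T gp gm Kp Km ap am bp bm (T - k)"
      by auto
    then show ?case using recursion_from_extend[OF t] unfolding t_Suc by blast
  qed
  from this[of T] show ?thesis by simp
qed

end

lemma (in market) tc_recursion_intro:
  "recursion_from M s P T gp gm Kp Km ap am bp bm t0 \<Longrightarrow> tc_recursion M P s T gp gm Kp Km ap am bp bm t0"
  by unfold_locales

theorem theorem1:
  fixes M :: "'w measure" and P :: "nat \<Rightarrow> 'w \<Rightarrow> real^'n"
    and s gp gm :: "nat \<Rightarrow> real" and T :: nat and W :: real
  assumes prob: "prob_space M"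
    and s_gt1: "\<And>t. t < T \<Longrightarrow> s t > 1"
    and meas: "\<And>t. t < T \<Longrightarrow> P t \<in> borel_measurable M"
    and indep: "prob_space.indep_vars M (\<lambda>_. borel) P {..<T}"
    and abs_cont: "\<And>t. t < T \<Longrightarrow> absolutely_continuous lborel (distr M lborel (P t))"
    and int1: "\<And>t i. t < T \<Longrightarrow> integrable M (\<lambda>\<omega>. P t \<omega> $ i)"
    and int2: "\<And>t i. t < T \<Longrightarrow> integrable M (\<lambda>\<omega>. (P t \<omega> $ i)\<^sup>2)"
    and cov_pd: "\<And>t. t < T \<Longrightarrow> pos_def_matrix (cov_matrix M (P t))"
    and no_arb: "\<And>t L. t < T \<Longrightarrow> L \<noteq> 0 \<Longrightarrow>
        \<not> (AE \<omega> in M. P t \<omega> \<bullet> L \<le> 0) \<and> \<not> (AE \<omega> in M. P t \<omega> \<bullet> L \<ge> 0)"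
    and gp_nonneg: "\<And>t. gp t \<ge> 0"
    and gm_nonneg: "\<And>t. gm t \<ge> 0"
  shows
    "(\<forall>t<T. \<forall>Kp Km ap am bp bm.
        recursion_from M s P T gp gm Kp Km ap am bp bm (Suc t) \<longrightarrow>
          (\<exists>K. \<forall>K'. Fplus M s P T ap am bp bm gp t K \<le> Fplus M s P T ap am bp bm gp t K')
        \<and> (\<exists>K. \<forall>K'. Fminus M s P T ap am bp bm gm t K \<le> Fminus M s P T ap am bp bm gm t K'))
   \<and> (\<exists>Kp Km ap am bp bm. recursion_from M s P T gp gm Kp Km ap am bp bm 0)
   \<and> (\<forall>Kp Km ap am bp bm. recursion_from M s P T gp gm Kp Km ap am bp bm 0 \<longrightarrow>
        (\<forall>t\<le>T. bp t - (ap t)\<^sup>2 \<ge> 0 \<and> bm t - (am t)\<^sup>2 \<ge> 0)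
      \<and> time_consistent M s P T (gamma_beh s T W gp gm) (tc_policy s T W Kp Km)
      \<and> (\<forall>x0.
           integral\<^sup>L M (wealth s P (tc_policy s T W Kp Km) 0 T x0)
             = rho s T 0 * x0
               + ap 0 * (x0 - W / rho s T 0) * of_bool (x0 \<ge> W / rho s T 0)
               + am 0 * (x0 - W / rho s T 0) * of_bool (x0 < W / rho s T 0)
         \<and> var M (wealth s P (tc_policy s T W Kp Km) 0 T x0)
             = ((bp 0 - (ap 0)\<^sup>2) * of_bool (x0 \<ge> W / rho s T 0)
                + (bm 0 - (am 0)\<^sup>2) * of_bool (x0 < W / rho s T 0)) * (x0 - W / rho s T 0)\<^sup>2))"
proof -
  interpret market M P s T
    using prob s_gt1 meas indep abs_cont int1 int2 no_arb by (simp add: market_def market_axioms_def)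
  note solution = tc_recursion_intro[of _ _ _ _ _ _ _ _ 0]
  show ?thesis
    using minimizers_exist recursion_solvable
      tc_recursion.variance_terms_nonneg[OF solution] tc_recursion.tc_policy_time_consistent[OF solution]
      tc_recursion.terminal_wealth_moments[OF solution]
    by auto
qed

end
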